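(* Let $\mu>0$, $p\in(0,1)$. The invariant measure $\mathbb{Q}$ of the environment process of the totally asymmetric random walk on dynamical percolation on $\mathbb{Z}$ and the Bernoulli$(p)$ product measure $\pi_p$ on $\{0,1\}^{E(\mathbb{Z})}$ are equivalent (mutually absolutely continuous).
   Context: TARWDP on $\mathbb{Z}$: edge states ($1$ = open) initially i.i.d. Bernoulli$(p)$, each resampled as independent Bernoulli$(p)$ at rate $\mu$; the walker starts at $0$ and at rings of a rate-$1$ Poisson clock moves from $x$ to $x+1$ iff $\{x,x+1\}$ is open. Environment process $\xi_t(\{x,x+1\})=\eta_t(\{X_t+x,X_t+x+1\})$ with semigroup $S(t)$, started from $\pi_p$. The measure $\mathbb{Q}$ is defined by $\mathbb{Q}[A]=\mathbb{E}[\tau_1]^{-1}\mathbb{E}[\int_0^{\tau_1}\pi_pS(t)[A]\,dt]$, where $\tau_1$ is the first regeneration time: with the infected set $I_t$ (start $I_0=\emptyset$; each edge examination by the walker adds a new copy of that edge; copies are removed at total rate $\mu|I_t|$, uniformly, a removal of the first copy of an edge triggering a Bernoulli$(p)$ resampling of that edge), $\tau_1=\inf\{t>0: I_t=\emptyset\text{ and } I_{t'}\neq\emptyset\text{ for some }t'<t\}$; $\tau_1>0$ a.s., has exponential tails and $\mathbb{E}[\tau_1]=e^{1/\mu}$. *)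

theory Defs
  imports "HOL-Probability.Probability"
begin

text \<open>Edges {x,x+1} of Z are identified with x :: int; True = open.
  All randomness lives on one product probability space indexed by src.\<close>

datatype src =
    Init int        \<comment> \<open>initial state of edge x (Bernoulli p)\<close>
  | ResT int nat    \<comment> \<open>n-th inter-resampling time of edge x (Exp mu)\<close>
  | ResV int nat    \<comment> \<open>value drawn at the n-th resampling of edge x (Bernoulli p)\<close>
  | Ring nat        \<comment> \<open>n-th inter-ring time of the walker's clock (Exp 1)\<close>
  | Life nat        \<comment> \<open>lifetime of the infected copy created at the n-th ring (Exp mu)\<close>

definition expo :: "real \<Rightarrow> real measure" where
  "expo l = density lborel (exponential_density l)"

definition bern :: "real \<Rightarrow> real measure" where
  "bern p = distr (measure_pmf (bernoulli_pmf p)) borel (\<lambda>b. if b then 1 else 0)"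

definition src_dist :: "real \<Rightarrow> real \<Rightarrow> src \<Rightarrow> real measure" where
  "src_dist mu p i = (case i of
      Init _ \<Rightarrow> bern p | ResT _ _ \<Rightarrow> expo mu | ResV _ _ \<Rightarrow> bern p
    | Ring _ \<Rightarrow> expo 1 | Life _ \<Rightarrow> expo mu)"

definition Omega :: "real \<Rightarrow> real \<Rightarrow> (src \<Rightarrow> real) measure" where
  "Omega mu p = Pi\<^sub>M UNIV (src_dist mu p)"

definition resample_time :: "(src \<Rightarrow> real) \<Rightarrow> int \<Rightarrow> nat \<Rightarrow> real" where
  "resample_time \<omega> x n = (\<Sum>k\<le>n. \<omega> (ResT x k))"

definition ring_time :: "(src \<Rightarrow> real) \<Rightarrow> nat \<Rightarrow> real" where
  "ring_time \<omega> n = (\<Sum>k\<le>n. \<omega> (Ring k))"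

definition edge_state :: "(src \<Rightarrow> real) \<Rightarrow> int \<Rightarrow> real \<Rightarrow> bool" where
  "edge_state \<omega> x t =
     (let N = card {n. resample_time \<omega> x n \<le> t}
      in if N = 0 then \<omega> (Init x) = 1 else \<omega> (ResV x (N - 1)) = 1)"

primrec wpos :: "(src \<Rightarrow> real) \<Rightarrow> nat \<Rightarrow> int" where
  "wpos \<omega> 0 = 0"
| "wpos \<omega> (Suc n) =
     (if edge_state \<omega> (wpos \<omega> n) (ring_time \<omega> n) then wpos \<omega> n + 1 else wpos \<omega> n)"

definition walker_pos :: "(src \<Rightarrow> real) \<Rightarrow> real \<Rightarrow> int" where
  "walker_pos \<omega> t = wpos \<omega> (card {n. ring_time \<omega> n \<le> t})"

definition env :: "(src \<Rightarrow> real) \<Rightarrow> real \<Rightarrow> int \<Rightarrow> bool" where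
  "env \<omega> t = (\<lambda>y. edge_state \<omega> (walker_pos \<omega> t + y) t)"

definition ENV :: "(int \<Rightarrow> bool) measure" where
  "ENV = Pi\<^sub>M UNIV (\<lambda>_. count_space UNIV)"

definition pi_p :: "real \<Rightarrow> (int \<Rightarrow> bool) measure" where
  "pi_p p = Pi\<^sub>M UNIV (\<lambda>_. measure_pmf (bernoulli_pmf p))"

text \<open>pi_p S(t): law of the environment process at time t started from pi_p.\<close>
definition env_law :: "real \<Rightarrow> real \<Rightarrow> real \<Rightarrow> (int \<Rightarrow> bool) measure" where
  "env_law mu p t = distr (Omega mu p) ENV (\<lambda>\<omega>. env \<omega> t)"

text \<open>Infected set: one copy per edge examination (ring), each copy removed after an
  independent Exp(mu) lifetime (equivalently, uniform removal at total rate mu |I_t|).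
  I_t is nonempty iff some copy is alive at time t.\<close>
definition infected :: "(src \<Rightarrow> real) \<Rightarrow> real \<Rightarrow> bool" where
  "infected \<omega> t = (\<exists>n. ring_time \<omega> n \<le> t \<and> t < ring_time \<omega> n + \<omega> (Life n))"

definition tau1 :: "(src \<Rightarrow> real) \<Rightarrow> real" where
  "tau1 \<omega> = Inf {t. 0 < t \<and> \<not> infected \<omega> t \<and> (\<exists>t'<t. infected \<omega> t')}"

definition Q_fun :: "real \<Rightarrow> real \<Rightarrow> (int \<Rightarrow> bool) set \<Rightarrow> ennreal" where
  "Q_fun mu p A =
     (\<integral>\<^sup>+\<omega>. (\<integral>\<^sup>+t\<in>{0..tau1 \<omega>}. emeasure (env_law mu p t) A \<partial>lborel) \<partial>Omega mu p)
     / (\<integral>\<^sup>+\<omega>. ennreal (tau1 \<omega>) \<partial>Omega mu p)"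

definition Q :: "real \<Rightarrow> real \<Rightarrow> (int \<Rightarrow> bool) measure" where
  "Q mu p = measure_of (space ENV) (sets ENV) (Q_fun mu p)"

end

theory Submission
  imports Defs
begin

text \<open>
  Both measures live on the product sigma-algebra, so it suffices to compare null sets.
  At a fixed time t the state of every edge is a fresh Bernoulli(p) coordinate of the sample
  space, selected by the independent resampling clocks of that edge, so the configuration
  seen from any fixed site has law pi_p. The environment seen from the walker is one of these
  countably many shifted configurations, hence pi_p-null sets are null for every pi_p S(t) and
  so for Q. Conversely, with probability e^{-t} the walker has not moved by time t, and then
  it sees the unshifted configuration; thus pi_p S(t) \<ge> e^{-t} pi_p, and since tau1 > 1 with
  probability at least e^{-1}, Q dominates a positive multiple of pi_p, provided E[tau1] < \<infinity>.

  Almost surely tau1 is the end of the first busy period of the infected set. Following the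
  busy period ring by ring, a + exp(mu/2 \<cdot> R), with R the remaining lifetime of the infection,
  is a supermartingale with geometric decay on the event that the period is still running;
  so the number of rings in the busy period has a geometric tail and E[tau1] is finite.
\<close>

lemma nn_integral_PiM_fun_upd:
  assumes M: "\<And>j. j \<in> I \<Longrightarrow> prob_space (M j)" and i: "i \<in> I"
    and F: "F \<in> borel_measurable (PiM I M)"
  shows "(\<integral>\<^sup>+\<omega>. F \<omega> \<partial>PiM I M) = (\<integral>\<^sup>+\<omega>. (\<integral>\<^sup>+x. F (fun_upd \<omega> i x) \<partial>M i) \<partial>PiM I M)"
proof -
  interpret Mi: prob_space "M i" using M i .
  interpret P: prob_space "PiM I M" using M by (rule prob_space_PiM)
  interpret pair_sigma_finite "M i" "PiM I M" ..
  have upd: "(\<lambda>(x, \<omega>). fun_upd \<omega> i x) \<in> measurable (M i \<Otimes>\<^sub>M PiM I M) (PiM I M)"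
  proof (rule measurable_PiM_single')
    fix j assume "j \<in> I"
    then show "(\<lambda>z. (case z of (x, \<omega>) \<Rightarrow> fun_upd \<omega> i x) j) \<in> measurable (M i \<Otimes>\<^sub>M PiM I M) (M j)"
      by (cases "j = i") (simp_all add: split_beta')
  qed (auto simp: space_pair_measure space_PiM PiE_iff extensional_def i)
  have "(\<integral>\<^sup>+\<omega>. F \<omega> \<partial>PiM I M) = (\<integral>\<^sup>+\<omega>. F \<omega> \<partial>distr (M i \<Otimes>\<^sub>M PiM I M) (PiM I M) (\<lambda>(x, \<omega>). fun_upd \<omega> i x))"
    using distr_pair_PiM_eq_PiM[of I M i] M i by (simp add: insert_absorb)
  also have "\<dots> = (\<integral>\<^sup>+z. F (case z of (x, \<omega>) \<Rightarrow> fun_upd \<omega> i x) \<partial>(M i \<Otimes>\<^sub>M PiM I M))"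
    by (rule nn_integral_distr[OF upd]) (simp add: F)
  also have "\<dots> = (\<integral>\<^sup>+\<omega>. (\<integral>\<^sup>+x. F (fun_upd \<omega> i x) \<partial>M i) \<partial>PiM I M)"
    by (subst nn_integral_snd[symmetric]) (auto intro!: measurable_compose[OF upd F])
  finally show ?thesis .
qed

lemma nn_integral_PiM_mult_component:
  assumes M: "\<And>j. j \<in> I \<Longrightarrow> prob_space (M j)" and i: "i \<in> I"
    and G: "G \<in> borel_measurable (PiM I M)" and h: "h \<in> borel_measurable (M i)"
    and G_upd: "\<And>\<omega> v. G (fun_upd \<omega> i v) = G \<omega>"
  shows "(\<integral>\<^sup>+\<omega>. G \<omega> * h (\<omega> i) \<partial>PiM I M) = (\<integral>\<^sup>+\<omega>. G \<omega> \<partial>PiM I M) * (\<integral>\<^sup>+x. h x \<partial>M i)"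
proof -
  have "(\<lambda>\<omega>. G \<omega> * h (\<omega> i)) \<in> borel_measurable (PiM I M)"
    using G h i by measurable
  then have "(\<integral>\<^sup>+\<omega>. G \<omega> * h (\<omega> i) \<partial>PiM I M) = (\<integral>\<^sup>+\<omega>. (\<integral>\<^sup>+x. G \<omega> * h x \<partial>M i) \<partial>PiM I M)"
    by (subst nn_integral_PiM_fun_upd[OF M i]) (simp_all add: G_upd)
  also have "\<dots> = (\<integral>\<^sup>+\<omega>. G \<omega> \<partial>PiM I M) * (\<integral>\<^sup>+x. h x \<partial>M i)"
    using G h by (simp add: nn_integral_cmult nn_integral_multc)
  finally show ?thesis .
qed

lemma emeasure_PiM_Collect_component:
  assumes M: "\<And>j. j \<in> I \<Longrightarrow> prob_space (M j)" and i: "i \<in> I"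
    and G[measurable]: "Measurable.pred (PiM I M) G" and B: "B \<in> sets (M i)"
    and G_upd: "\<And>\<omega> v. G (fun_upd \<omega> i v) = G \<omega>"
  shows "emeasure (PiM I M) {\<omega>\<in>space (PiM I M). G \<omega> \<and> \<omega> i \<in> B}
    = emeasure (PiM I M) {\<omega>\<in>space (PiM I M). G \<omega>} * emeasure (M i) B"
proof -
  have [measurable]: "{\<omega>\<in>space (PiM I M). G \<omega> \<and> \<omega> i \<in> B} \<in> sets (PiM I M)"
    using B i by measurable
  have "emeasure (PiM I M) {\<omega>\<in>space (PiM I M). G \<omega> \<and> \<omega> i \<in> B}
      = (\<integral>\<^sup>+\<omega>. indicator {\<omega>\<in>space (PiM I M). G \<omega> \<and> \<omega> i \<in> B} \<omega> \<partial>PiM I M)"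
    by simp
  also have "\<dots> = (\<integral>\<^sup>+\<omega>. of_bool (G \<omega>) * indicator B (\<omega> i) \<partial>PiM I M)"
    by (rule nn_integral_cong) (simp add: indicator_def)
  also have "\<dots> = (\<integral>\<^sup>+\<omega>. of_bool (G \<omega>) \<partial>PiM I M) * emeasure (M i) B"
    using B by (subst nn_integral_PiM_mult_component[OF M i]) (auto simp: G_upd)
  also have "(\<integral>\<^sup>+\<omega>. of_bool (G \<omega>) \<partial>PiM I M)
      = (\<integral>\<^sup>+\<omega>. indicator {\<omega>\<in>space (PiM I M). G \<omega>} \<omega> \<partial>PiM I M)"
    by (rule nn_integral_cong) (simp add: indicator_def)
  also have "\<dots> = emeasure (PiM I M) {\<omega>\<in>space (PiM I M). G \<omega>}"
    by simp
  finally show ?thesis .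
qed

lemma prob_space_expo: "0 < l \<Longrightarrow> prob_space (expo l)"
  unfolding expo_def by (rule prob_space_exponential_density)

lemma sets_expo[simp, measurable_cong]: "sets (expo l) = sets borel"
  by (simp add: expo_def)

lemma expo_greaterThan:
  assumes l: "0 < l" and a: "0 \<le> a"
  shows "emeasure (expo l) {a<..} = ennreal (exp (- a * l))"
proof -
  interpret prob_space "expo l" by (rule prob_space_expo[OF l])
  have "distributed (expo l) lborel (\<lambda>x. x) (exponential_density l)"
    unfolding distributed_def expo_def by (auto simp: distr_id2)
  then have "\<P>(x in expo l. a < x) = exp (- a * l)"
    by (rule exponential_distributedD_gt[OF _ a l])
  moreover have "{x \<in> space (expo l). a < x} = {a<..}"
    by (auto simp: expo_def)
  ultimately show ?thesis
    by (simp add: emeasure_eq_measure)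
qed

lemma expo_atMost:
  assumes l: "0 < l" and a: "0 \<le> a"
  shows "emeasure (expo l) {..a} = ennreal (1 - exp (- a * l))"
proof -
  interpret prob_space "expo l" by (rule prob_space_expo[OF l])
  have "distributed (expo l) lborel (\<lambda>x. x) (exponential_density l)"
    unfolding distributed_def expo_def by (auto simp: distr_id2)
  then have "\<P>(x in expo l. x \<le> a) = 1 - exp (- a * l)"
    by (rule exponential_distributedD_le[OF _ a l])
  moreover have "{x \<in> space (expo l). x \<le> a} = {..a}"
    by (auto simp: expo_def)
  ultimately show ?thesis
    by (simp add: emeasure_eq_measure)
qed

lemma AE_expo_pos: "AE x in expo l. 0 < x"
proof -
  have "AE x in lborel. x \<noteq> 0" by (rule AE_lborel_singleton)
  then show ?thesis
    unfolding expo_def by (subst AE_density) (auto simp: exponential_density_def elim: AE_mp)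
qed

lemma nn_integral_expo_exp:
  assumes l: "0 < l" and c: "c < l"
  shows "(\<integral>\<^sup>+x. ennreal (exp (c * x)) \<partial>expo l) = ennreal (l / (l - c))"
proof -
  have lc: "0 < l - c" using c by simp
  interpret P: prob_space "density lborel (exponential_density (l - c))"
    by (rule prob_space_exponential_density[OF lc])
  have "(\<integral>\<^sup>+x. ennreal (exp (c * x)) \<partial>expo l) =
      (\<integral>\<^sup>+x. ennreal (exponential_density l x) * ennreal (exp (c * x)) \<partial>lborel)"
    unfolding expo_def by (rule nn_integral_density) auto
  also have "\<dots> = (\<integral>\<^sup>+x. ennreal (l / (l - c)) * ennreal (exponential_density (l - c) x) \<partial>lborel)"
  proof (rule nn_integral_cong)
    fix x :: real
    have "exponential_density l x * exp (c * x) = (l / (l - c)) * exponential_density (l - c) x"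
      using lc by (auto simp: exponential_density_def field_simps exp_add[symmetric] algebra_simps)
    then show "ennreal (exponential_density l x) * ennreal (exp (c * x)) =
        ennreal (l / (l - c)) * ennreal (exponential_density (l - c) x)"
      using l lc by (simp add: ennreal_mult'[symmetric] exponential_density_nonneg)
  qed
  also have "\<dots> = ennreal (l / (l - c)) * (\<integral>\<^sup>+x. ennreal (exponential_density (l - c) x) \<partial>lborel)"
    by (rule nn_integral_cmult) auto
  also have "(\<integral>\<^sup>+x. ennreal (exponential_density (l - c) x) \<partial>lborel) = 1"
    using P.emeasure_space_1 by (simp add: emeasure_density)
  finally show ?thesis by simp
qed

lemma nn_integral_expo_const_add_exp:
  assumes mu: "0 < mu" and c: "0 \<le> c"
  shows "(\<integral>\<^sup>+x. ennreal (c + exp (mu / 2 * x)) \<partial>expo mu) = ennreal (c + 2)"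
proof -
  interpret prob_space "expo mu" by (rule prob_space_expo[OF mu])
  have "(\<integral>\<^sup>+x. ennreal (c + exp (mu / 2 * x)) \<partial>expo mu)
      = (\<integral>\<^sup>+x. ennreal c + ennreal (exp (mu / 2 * x)) \<partial>expo mu)"
    using c by (intro nn_integral_cong) (simp add: ennreal_plus)
  also have "\<dots> = (\<integral>\<^sup>+x. ennreal c \<partial>expo mu) + (\<integral>\<^sup>+x. ennreal (exp (mu / 2 * x)) \<partial>expo mu)"
    by (rule nn_integral_add) (auto simp: expo_def)
  also have "\<dots> = ennreal c + ennreal (mu / (mu - mu / 2))"
    using mu by (simp only: nn_integral_const emeasure_space_1 mult_1_right nn_integral_expo_exp)
  also have "mu / (mu - mu / 2) = 2"
    using mu by (simp add: field_simps)
  finally show ?thesis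
    using c by (simp add: ennreal_plus)
qed

lemma nn_integral_expo_id:
  assumes l: "0 < l"
  shows "(\<integral>\<^sup>+x. ennreal x \<partial>expo l) = ennreal (1 / l)"
proof -
  have "(\<integral>\<^sup>+x. ennreal x \<partial>expo l) = (\<integral>\<^sup>+x. ennreal (erlang_density 0 l x * x ^ 1) \<partial>lborel)"
    unfolding expo_def using l
    by (subst nn_integral_density)
      (auto intro!: nn_integral_cong simp: ennreal_mult'[symmetric] exponential_density_def erlang_density_def)
  also have "\<dots> = ennreal (1 / l)"
    using nn_integral_erlang_ith_moment[OF l, of 0 1] by simp
  finally show ?thesis .
qed

lemma prob_space_bern: "prob_space (bern p)"
  unfolding bern_def by (intro prob_space.prob_space_distr prob_space_measure_pmf) auto

lemma prob_space_src_dist: "0 < mu \<Longrightarrow> prob_space (src_dist mu p i)"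
  unfolding src_dist_def by (cases i) (auto intro: prob_space_bern prob_space_expo)

lemma prob_space_Omega: "0 < mu \<Longrightarrow> prob_space (Omega mu p)"
  unfolding Omega_def by (intro prob_space_PiM prob_space_src_dist)

lemma src_dist_simps[simp]:
  "src_dist mu p (Init x) = bern p" "src_dist mu p (ResT x k) = expo mu"
  "src_dist mu p (ResV x k) = bern p" "src_dist mu p (Ring k) = expo 1"
  "src_dist mu p (Life k) = expo mu"
  by (simp_all add: src_dist_def)

lemma sets_src_dist[simp, measurable_cong]: "sets (src_dist mu p i) = sets borel"
  by (cases i) (simp_all add: bern_def)

lemma space_src_dist[simp]: "space (src_dist mu p i) = UNIV"
  using sets_eq_imp_space_eq[OF sets_src_dist[of mu p i]] by simp

lemma space_Omega[simp]: "space (Omega mu p) = UNIV"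
  unfolding Omega_def by (simp add: space_PiM)

lemma nn_integral_Omega_fun_upd:
  assumes "0 < mu" and "F \<in> borel_measurable (Omega mu p)"
  shows "(\<integral>\<^sup>+\<omega>. F \<omega> \<partial>Omega mu p) = (\<integral>\<^sup>+\<omega>. (\<integral>\<^sup>+x. F (fun_upd \<omega> i x) \<partial>src_dist mu p i) \<partial>Omega mu p)"
  using assms unfolding Omega_def by (intro nn_integral_PiM_fun_upd prob_space_src_dist) auto

lemma nn_integral_Omega_mult_component:
  assumes "0 < mu" and "G \<in> borel_measurable (Omega mu p)" and "h \<in> borel_measurable borel"
    and "\<And>\<omega> v. G (fun_upd \<omega> i v) = G \<omega>"
  shows "(\<integral>\<^sup>+\<omega>. G \<omega> * h (\<omega> i) \<partial>Omega mu p) = (\<integral>\<^sup>+\<omega>. G \<omega> \<partial>Omega mu p) * (\<integral>\<^sup>+x. h x \<partial>src_dist mu p i)"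
  using assms unfolding Omega_def
  by (intro nn_integral_PiM_mult_component prob_space_src_dist) (auto cong: measurable_cong_sets)

lemma nn_integral_Omega_component:
  assumes "0 < mu" and "h \<in> borel_measurable borel"
  shows "(\<integral>\<^sup>+\<omega>. h (\<omega> i) \<partial>Omega mu p) = (\<integral>\<^sup>+x. h x \<partial>src_dist mu p i)"
proof -
  have "emeasure (Omega mu p) UNIV = 1"
    using prob_space.emeasure_space_1[OF prob_space_Omega[OF assms(1)]] by simp
  then show ?thesis
    using nn_integral_Omega_mult_component[of mu "\<lambda>_. 1" p h i] assms by simp
qed

lemma emeasure_Omega_component:
  assumes "0 < mu" and "Measurable.pred (Omega mu p) G" and "B \<in> sets borel"
    and "\<And>\<omega> v. G (fun_upd \<omega> i v) = G \<omega>"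
  shows "emeasure (Omega mu p) {\<omega>. G \<omega> \<and> \<omega> i \<in> B} = emeasure (Omega mu p) {\<omega>. G \<omega>} * emeasure (src_dist mu p i) B"
  using emeasure_PiM_Collect_component[of UNIV "src_dist mu p" i G B] assms
  by (simp add: prob_space_src_dist flip: Omega_def)

lemma sets_Omega_Collect: "Measurable.pred (Omega mu p) P \<Longrightarrow> {\<omega>. P \<omega>} \<in> sets (Omega mu p)"
  unfolding pred_def by simp

lemma AE_Omega_expo_pos:
  assumes mu: "0 < mu"
  shows "AE \<omega> in Omega mu p. (\<forall>k. 0 < \<omega> (Ring k)) \<and> (\<forall>k. 0 < \<omega> (Life k))"
proof -
  have component: "AE \<omega> in Omega mu p. 0 < \<omega> i" if "AE x in src_dist mu p i. 0 < x" for i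
    unfolding Omega_def
    by (rule AE_PiM_component[where P = "\<lambda>x. 0 < x"]) (simp_all add: prob_space_src_dist[OF mu] that)
  have "AE \<omega> in Omega mu p. 0 < \<omega> (Ring k)" for k
    by (rule component) (subst src_dist_simps, rule AE_expo_pos)
  moreover have "AE \<omega> in Omega mu p. 0 < \<omega> (Life k)" for k
    by (rule component) (subst src_dist_simps, rule AE_expo_pos)
  ultimately show ?thesis
    unfolding AE_conj_iff AE_all_countable by simp
qed

lemma ring_time_Suc: "ring_time \<omega> (Suc k) = ring_time \<omega> k + \<omega> (Ring (Suc k))"
  unfolding ring_time_def by simp

lemma ring_time_0: "ring_time \<omega> 0 = \<omega> (Ring 0)"
  unfolding ring_time_def by simp

lemma ring_time_mono:
  assumes "\<forall>k\<ge>1. 0 \<le> \<omega> (Ring k)" and "i \<le> j"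
  shows "ring_time \<omega> i \<le> ring_time \<omega> j"
  using assms(2)
proof (induction j)
  case (Suc j)
  then show ?case
    using assms(1)[rule_format, of "Suc j"] by (cases "i = Suc j") (auto simp: ring_time_Suc)
qed simp

lemma card_Collect_nat_eq_iff:
  "card {n::nat. P n} = k \<longleftrightarrow>
    (k = 0 \<and> (\<forall>m. \<exists>n\<ge>m. P n)) \<or> (\<exists>F\<in>{F. finite F \<and> card F = k}. \<forall>n. P n = (n \<in> F))"
proof
  assume c: "card {n. P n} = k"
  show "(k = 0 \<and> (\<forall>m. \<exists>n\<ge>m. P n)) \<or> (\<exists>F\<in>{F. finite F \<and> card F = k}. \<forall>n. P n = (n \<in> F))"
  proof (cases "finite {n. P n}")
    case True then show ?thesis using c by (intro disjI2 bexI[of _ "{n. P n}"]) auto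
  next
    case False then show ?thesis using c infinite_nat_iff_unbounded_le[of "{n. P n}"] by auto
  qed
next
  assume "(k = 0 \<and> (\<forall>m. \<exists>n\<ge>m. P n)) \<or> (\<exists>F\<in>{F. finite F \<and> card F = k}. \<forall>n. P n = (n \<in> F))"
  then show "card {n. P n} = k"
  proof
    assume "k = 0 \<and> (\<forall>m. \<exists>n\<ge>m. P n)"
    then show ?thesis using infinite_nat_iff_unbounded_le[of "{n. P n}"] by auto
  next
    assume "\<exists>F\<in>{F. finite F \<and> card F = k}. \<forall>n. P n = (n \<in> F)"
    then obtain F where "finite F" "card F = k" "\<forall>n. P n = (n \<in> F)" by auto
    then have "{n. P n} = F" by auto
    then show ?thesis using \<open>card F = k\<close> by simp
  qed
qed

lemma measurable_card_Collect_nat[measurable]: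
  assumes [measurable]: "\<And>n. Measurable.pred M (P n)"
  shows "(\<lambda>z. card {n::nat. P n z}) \<in> measurable M (count_space UNIV)"
  unfolding measurable_count_space_eq2_countable
proof safe
  fix k :: nat
  have [measurable]: "countable {F::nat set. finite F \<and> card F = k}"
    by (rule countable_subset[OF _ countable_Collect_finite]) auto
  have "(\<lambda>z. card {n. P n z}) -` {k} \<inter> space M =
     {z \<in> space M. (k = 0 \<and> (\<forall>m. \<exists>n\<ge>m. P n z)) \<or> (\<exists>F\<in>{F. finite F \<and> card F = k}. \<forall>n. P n z = (n \<in> F))}"
    using card_Collect_nat_eq_iff[of "\<lambda>n. P n _" k] by auto
  also have "\<dots> \<in> sets M"
    by measurable
  finally show "(\<lambda>z. card {n. P n z}) -` {k} \<inter> space M \<in> sets M" .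
qed auto

lemma measurable_Omega_component[measurable]: "(\<lambda>\<omega>. \<omega> i) \<in> borel_measurable (Omega mu p)"
  unfolding Omega_def
  using measurable_component_singleton[of i UNIV "src_dist mu p"]
  by (simp cong: measurable_cong_sets)

lemma measurable_resample_time[measurable]: "(\<lambda>\<omega>. resample_time \<omega> x n) \<in> borel_measurable (Omega mu p)"
  unfolding resample_time_def by measurable

lemma measurable_ring_time[measurable]: "(\<lambda>\<omega>. ring_time \<omega> n) \<in> borel_measurable (Omega mu p)"
  unfolding ring_time_def by measurable

lemma edge_state_iff:
  "edge_state \<omega> x t \<longleftrightarrow> (\<exists>N. card {n. resample_time \<omega> x n \<le> t} = N \<and>
     ((N = 0 \<and> \<omega> (Init x) = 1) \<or> (N \<noteq> 0 \<and> \<omega> (ResV x (N - 1)) = 1)))"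
  unfolding edge_state_def Let_def by auto

lemma measurable_edge_state_pair:
  "Measurable.pred (borel \<Otimes>\<^sub>M Omega mu p) (\<lambda>z. edge_state (snd z) x (fst z))"
  unfolding edge_state_iff by measurable

lemma measurable_edge_state[measurable]:
  assumes [measurable]: "T \<in> borel_measurable M" "W \<in> measurable M (Omega mu p)"
  shows "Measurable.pred M (\<lambda>z. edge_state (W z) x (T z))"
  using measurable_compose[OF _ measurable_edge_state_pair, of "\<lambda>z. (T z, W z)" M] by simp

lemma measurable_wpos[measurable]: "(\<lambda>\<omega>. wpos \<omega> n) \<in> measurable (Omega mu p) (count_space UNIV)"
proof (induction n)
  case 0 then show ?case by simp
next
  case (Suc n)
  have "(\<lambda>\<omega>. (\<lambda>x \<omega>. if edge_state \<omega> x (ring_time \<omega> n) then x + 1 else x) (wpos \<omega> n) \<omega>)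
     \<in> measurable (Omega mu p) (count_space UNIV)"
    by (rule measurable_compose_countable'[OF _ Suc]) auto
  then show ?case by simp
qed

lemma measurable_walker_pos_pair:
  "(\<lambda>z. walker_pos (snd z) (fst z)) \<in> measurable (borel \<Otimes>\<^sub>M Omega mu p) (count_space UNIV)"
proof -
  have "(\<lambda>z. (\<lambda>k z. wpos (snd z) k) (card {n. ring_time (snd z) n \<le> fst z}) z)
     \<in> measurable (borel \<Otimes>\<^sub>M Omega mu p) (count_space UNIV)"
    by (rule measurable_compose_countable'[OF measurable_compose[OF measurable_snd measurable_wpos]])
      measurable
  then show ?thesis unfolding walker_pos_def by simp
qed

lemma measurable_env_pair:
  "(\<lambda>z. env (snd z) (fst z)) \<in> measurable (borel \<Otimes>\<^sub>M Omega mu p) ENV"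
  unfolding ENV_def
proof (rule measurable_PiM_single')
  fix y :: int
  have "(\<lambda>z. (\<lambda>k z. edge_state (snd z) (k + y) (fst z)) (walker_pos (snd z) (fst z)) z)
     \<in> measurable (borel \<Otimes>\<^sub>M Omega mu p) (count_space UNIV)"
    by (rule measurable_compose_countable'[OF _ measurable_walker_pos_pair]) measurable
  then show "(\<lambda>z. env (snd z) (fst z) y) \<in> measurable (borel \<Otimes>\<^sub>M Omega mu p) (count_space UNIV)"
    unfolding env_def by simp
qed (auto simp: space_PiM)

lemma measurable_env[measurable]:
  assumes [measurable]: "T \<in> borel_measurable M" "W \<in> measurable M (Omega mu p)"
  shows "(\<lambda>z. env (W z) (T z)) \<in> measurable M ENV"
  using measurable_compose[OF _ measurable_env_pair, of "\<lambda>z. (T z, W z)" M] by simp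

lemma measurable_edge_states[measurable]:
  assumes [measurable]: "T \<in> borel_measurable M" "W \<in> measurable M (Omega mu p)"
  shows "(\<lambda>z. \<lambda>y. edge_state (W z) (e y) (T z)) \<in> measurable M ENV"
  unfolding ENV_def by (rule measurable_PiM_single') (auto simp: space_PiM)

subsection \<open>The configuration at a fixed time\<close>

definition state_src :: "int \<Rightarrow> nat \<Rightarrow> src" where
  "state_src x N = (case N of 0 \<Rightarrow> Init x | Suc k \<Rightarrow> ResV x k)"

lemma edge_state_eq_state_src:
  "edge_state \<omega> x t = (\<omega> (state_src x (card {n. resample_time \<omega> x n \<le> t})) = 1)"
  by (simp add: edge_state_def Let_def state_src_def split: nat.split)

lemma src_dist_state_src[simp]: "src_dist mu p (state_src x N) = bern p"
  by (simp add: state_src_def split: nat.split)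

lemma resample_time_fun_upd:
  "i \<notin> range (ResT x) \<Longrightarrow> resample_time (fun_upd \<omega> i v) x n = resample_time \<omega> x n"
  unfolding resample_time_def by (auto intro!: sum.cong)

lemma edge_state_fun_upd:
  "i \<notin> range (ResT x) \<Longrightarrow> i \<noteq> Init x \<Longrightarrow> i \<notin> range (ResV x) \<Longrightarrow>
    edge_state (fun_upd \<omega> i v) x t = edge_state \<omega> x t"
  unfolding edge_state_def Let_def by (auto simp add: resample_time_fun_upd)

lemma emeasure_bern_bool: "emeasure (bern p) {r. (r = 1) \<in> F} = emeasure (measure_pmf (bernoulli_pmf p)) F"
proof -
  have "emeasure (bern p) {r. (r = 1) \<in> F} =
      emeasure (measure_pmf (bernoulli_pmf p)) ((\<lambda>b::bool. if b then 1 else 0::real) -` {r. (r = 1) \<in> F})"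
    unfolding bern_def by (subst emeasure_distr) auto
  also have "(\<lambda>b::bool. if b then 1 else 0::real) -` {r. (r = 1) \<in> F} = F"
    by (rule set_eqI) (case_tac x; auto)
  finally show ?thesis .
qed

lemma pred_edge_state_in[measurable]: "Measurable.pred (Omega mu p) (\<lambda>\<omega>. edge_state \<omega> x t \<in> F)"
proof -
  have "(\<lambda>\<omega>. edge_state \<omega> x t \<in> F) =
      (\<lambda>\<omega>. (edge_state \<omega> x t \<and> True \<in> F) \<or> (\<not> edge_state \<omega> x t \<and> False \<in> F))"
    by (rule ext) (metis (full_types))
  also have "Measurable.pred (Omega mu p) \<dots>" by measurable
  finally show ?thesis .
qed

text \<open>Conditioning on the number N of resamplings of edge x up to time t, its state is the
  fresh Bernoulli coordinate state_src x N, which C does not see.\<close>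

lemma emeasure_edge_state_and:
  assumes mu: "0 < mu" and [measurable]: "Measurable.pred (Omega mu p) C"
    and C_upd: "\<And>\<omega> v k. C (fun_upd \<omega> (Init x) v) = C \<omega> \<and> C (fun_upd \<omega> (ResV x k) v) = C \<omega>"
  shows "emeasure (Omega mu p) {\<omega>. edge_state \<omega> x t \<in> F \<and> C \<omega>}
    = emeasure (measure_pmf (bernoulli_pmf p)) F * emeasure (Omega mu p) {\<omega>. C \<omega>}"
proof -
  define K where "K \<omega> = card {n. resample_time \<omega> x n \<le> t}" for \<omega>
  define B where "B = {r::real. (r = 1) \<in> F}"
  have [measurable]: "K \<in> measurable (Omega mu p) (count_space UNIV)"
    unfolding K_def by measurable
  have "B = (if True \<in> F then {1} else {}) \<union> (if False \<in> F then - {1} else {})"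
    unfolding B_def by (auto; metis (full_types))
  then have [measurable]: "B \<in> sets borel" by simp
  have K_upd: "K (fun_upd \<omega> (state_src x N) v) = K \<omega>" for \<omega> v N
    unfolding K_def by (subst resample_time_fun_upd) (auto simp: state_src_def split: nat.splits)
  have C_upd': "C (fun_upd \<omega> (state_src x N) v) = C \<omega>" for \<omega> v N
    using C_upd by (cases N) (auto simp: state_src_def)
  have "emeasure (Omega mu p) {\<omega>. edge_state \<omega> x t \<in> F \<and> C \<omega>}
      = emeasure (Omega mu p) (\<Union>N. {\<omega>. (K \<omega> = N \<and> C \<omega>) \<and> \<omega> (state_src x N) \<in> B})"
    by (rule arg_cong[where f = "emeasure _"]) (auto simp: K_def B_def edge_state_eq_state_src)
  also have "\<dots> = (\<Sum>N. emeasure (Omega mu p) {\<omega>. (K \<omega> = N \<and> C \<omega>) \<and> \<omega> (state_src x N) \<in> B})"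
    by (rule suminf_emeasure[symmetric])
      (auto simp: disjoint_family_on_def intro!: sets_Omega_Collect)
  also have "\<dots> = (\<Sum>N. emeasure (Omega mu p) {\<omega>. K \<omega> = N \<and> C \<omega>} * emeasure (bern p) B)"
    by (subst emeasure_Omega_component[OF mu]) (auto simp: K_upd C_upd')
  also have "\<dots> = (\<Sum>N. emeasure (Omega mu p) {\<omega>. K \<omega> = N \<and> C \<omega>}) * emeasure (bern p) B"
    by (rule ennreal_suminf_multc)
  also have "(\<Sum>N. emeasure (Omega mu p) {\<omega>. K \<omega> = N \<and> C \<omega>})
      = emeasure (Omega mu p) (\<Union>N. {\<omega>. K \<omega> = N \<and> C \<omega>})"
    by (rule suminf_emeasure) (auto simp: disjoint_family_on_def intro!: sets_Omega_Collect)
  also have "(\<Union>N. {\<omega>. K \<omega> = N \<and> C \<omega>}) = {\<omega>. C \<omega>}"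
    by auto
  finally show ?thesis
    by (simp add: B_def emeasure_bern_bool mult.commute)
qed

lemma emeasure_edge_states_cylinder:
  assumes mu: "0 < mu" and e: "inj e" and J: "finite J"
  shows "emeasure (Omega mu p) {\<omega>. \<forall>j\<in>J. edge_state \<omega> (e j) t \<in> F j}
    = (\<Prod>j\<in>J. emeasure (measure_pmf (bernoulli_pmf p)) (F j))"
  using J
proof (induction J rule: finite_induct)
  case empty
  then show ?case using prob_space.emeasure_space_1[OF prob_space_Omega[OF mu]] by simp
next
  case (insert j J)
  define C where "C \<omega> = (\<forall>j'\<in>J. edge_state \<omega> (e j') t \<in> F j')" for \<omega>
  have [measurable]: "Measurable.pred (Omega mu p) C"
    unfolding C_def using insert.hyps(1) by measurable
  have ne: "e j' \<noteq> e j" if "j' \<in> J" for j'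
    using insert.hyps(2) that e by (auto simp: inj_def)
  have "edge_state (fun_upd \<omega> (Init (e j)) v) (e j') t = edge_state \<omega> (e j') t"
    "edge_state (fun_upd \<omega> (ResV (e j) k) v) (e j') t = edge_state \<omega> (e j') t"
    if "j' \<in> J" for \<omega> v k j'
    using ne[OF that] by (intro edge_state_fun_upd; auto)+
  then have C_upd: "C (fun_upd \<omega> (Init (e j)) v) = C \<omega> \<and> C (fun_upd \<omega> (ResV (e j) k) v) = C \<omega>"
    for \<omega> v k
    unfolding C_def by simp
  have "emeasure (Omega mu p) {\<omega>. \<forall>j'\<in>insert j J. edge_state \<omega> (e j') t \<in> F j'}
      = emeasure (Omega mu p) {\<omega>. edge_state \<omega> (e j) t \<in> F j \<and> C \<omega>}"
    by (simp add: C_def)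
  also have "\<dots> = emeasure (measure_pmf (bernoulli_pmf p)) (F j) * emeasure (Omega mu p) {\<omega>. C \<omega>}"
    by (rule emeasure_edge_state_and[OF mu _ C_upd]) measurable
  also have "emeasure (Omega mu p) {\<omega>. C \<omega>} = (\<Prod>j\<in>J. emeasure (measure_pmf (bernoulli_pmf p)) (F j))"
    unfolding C_def by (rule insert.IH)
  finally show ?case
    using insert.hyps by simp
qed

lemma sets_ENV_eq_pi_p: "sets ENV = sets (pi_p p)"
  unfolding ENV_def pi_p_def by (intro sets_PiM_cong) auto

lemma distr_edge_states:
  assumes mu: "0 < mu" and e: "inj e"
  shows "distr (Omega mu p) ENV (\<lambda>\<omega> y. edge_state \<omega> (e y) t) = pi_p p"
proof -
  interpret product_prob_space "\<lambda>_::int. measure_pmf (bernoulli_pmf p)" UNIV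
    by unfold_locales
  show ?thesis
    unfolding pi_p_def
  proof (rule PiM_eq)
    fix J :: "int set" and F
    assume J: "finite J" "J \<subseteq> UNIV"
      and F: "\<And>j. j \<in> J \<Longrightarrow> F j \<in> sets (measure_pmf (bernoulli_pmf p))"
    let ?X = "prod_emb UNIV (\<lambda>_. measure_pmf (bernoulli_pmf p)) J (Pi\<^sub>E J F)"
    have X: "?X \<in> sets ENV"
      using sets_ENV_eq_pi_p[of p] J F unfolding pi_p_def by (auto intro!: sets_PiM_I)
    have vimage_X: "(\<lambda>\<omega> y. edge_state \<omega> (e y) t) -` ?X = {\<omega>. \<forall>j\<in>J. edge_state \<omega> (e j) t \<in> F j}"
      by (auto simp: prod_emb_def space_PiM PiE_iff)
    have "emeasure (distr (Omega mu p) ENV (\<lambda>\<omega> y. edge_state \<omega> (e y) t)) ?X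
        = emeasure (Omega mu p) {\<omega>. \<forall>j\<in>J. edge_state \<omega> (e j) t \<in> F j}"
      by (subst emeasure_distr) (simp_all only: X vimage_X space_Omega Int_UNIV_right, measurable)
    then show "emeasure (distr (Omega mu p) ENV (\<lambda>\<omega> y. edge_state \<omega> (e y) t)) ?X
        = (\<Prod>j\<in>J. emeasure (measure_pmf (bernoulli_pmf p)) (F j))"
      by (simp only: emeasure_edge_states_cylinder[OF mu e J(1)])
  qed (use sets_ENV_eq_pi_p[of p] in \<open>simp add: pi_p_def\<close>)
qed

subsection \<open>The environment seen from the walker\<close>

lemma emeasure_env_law:
  "A \<in> sets ENV \<Longrightarrow> emeasure (env_law mu p t) A = emeasure (Omega mu p) {\<omega>. env \<omega> t \<in> A}"
  unfolding env_law_def by (subst emeasure_distr) (auto simp: vimage_def)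

lemma pred_env_in[measurable]: "A \<in> sets ENV \<Longrightarrow> Measurable.pred (Omega mu p) (\<lambda>\<omega>. env \<omega> t \<in> A)"
  unfolding pred_def using measurable_sets[OF measurable_env[of "\<lambda>_. t" "Omega mu p" "\<lambda>\<omega>. \<omega>" mu p]]
  by (simp add: vimage_def)

lemma emeasure_edge_states:
  assumes mu: "0 < mu" and A: "A \<in> sets ENV" and e: "inj e"
  shows "emeasure (Omega mu p) {\<omega>. (\<lambda>y. edge_state \<omega> (e y) t) \<in> A} = emeasure (pi_p p) A"
proof -
  have "emeasure (Omega mu p) {\<omega>. (\<lambda>y. edge_state \<omega> (e y) t) \<in> A}
      = emeasure (distr (Omega mu p) ENV (\<lambda>\<omega> y. edge_state \<omega> (e y) t)) A"
    using A by (subst emeasure_distr) (auto simp: vimage_def)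
  then show ?thesis by (simp add: distr_edge_states[OF mu e])
qed

lemma emeasure_env_eq_0:
  assumes mu: "0 < mu" and A: "A \<in> sets ENV" and A0: "emeasure (pi_p p) A = 0"
  shows "emeasure (Omega mu p) {\<omega>. env \<omega> t \<in> A} = 0"
proof -
  have "{\<omega>. (\<lambda>y. edge_state \<omega> (k + y) t) \<in> A} \<in> null_sets (Omega mu p)" for k :: int
  proof -
    have "(\<lambda>\<omega>. (\<lambda>y. edge_state \<omega> (k + y) t)) \<in> measurable (Omega mu p) ENV"
      by measurable
    from measurable_sets[OF this A]
    have "{\<omega>. (\<lambda>y. edge_state \<omega> (k + y) t) \<in> A} \<in> sets (Omega mu p)"
      by (simp add: vimage_def)
    moreover have "inj (\<lambda>y::int. k + y)" by (auto simp: inj_def)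
    from emeasure_edge_states[OF mu A this] A0
    have "emeasure (Omega mu p) {\<omega>. (\<lambda>y. edge_state \<omega> (k + y) t) \<in> A} = 0" by simp
    ultimately show ?thesis by (simp add: null_sets_def)
  qed
  then have "(\<Union>k. {\<omega>. (\<lambda>y. edge_state \<omega> (k + y) t) \<in> A}) \<in> null_sets (Omega mu p)"
    by (intro null_sets_UN) auto
  moreover have "{\<omega>. env \<omega> t \<in> A} \<in> sets (Omega mu p)"
    using A by (intro sets_Omega_Collect) measurable
  moreover have "{\<omega>. env \<omega> t \<in> A} \<subseteq> (\<Union>k. {\<omega>. (\<lambda>y. edge_state \<omega> (k + y) t) \<in> A})"
    unfolding env_def by auto
  ultimately have "{\<omega>. env \<omega> t \<in> A} \<in> null_sets (Omega mu p)"
    by (rule null_sets_subset)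
  then show ?thesis by (rule null_setsD1)
qed

lemma emeasure_env_ge:
  assumes mu: "0 < mu" and A: "A \<in> sets ENV" and t: "0 \<le> t"
  shows "ennreal (exp (- t)) * emeasure (pi_p p) A \<le> emeasure (Omega mu p) {\<omega>. env \<omega> t \<in> A}"
proof -
  define G where "G \<omega> \<longleftrightarrow> (\<forall>k\<ge>1. 0 \<le> \<omega> (Ring k)) \<and> (\<lambda>y. edge_state \<omega> y t) \<in> A" for \<omega>
  have [measurable]: "Measurable.pred (Omega mu p) (\<lambda>\<omega>. (\<lambda>y. edge_state \<omega> y t) \<in> A)"
    using measurable_sets[OF measurable_edge_states[of "\<lambda>_. t" "Omega mu p" "\<lambda>\<omega>. \<omega>" mu p "\<lambda>y. y"] A]
    by (simp add: pred_def vimage_def)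
  have [measurable]: "Measurable.pred (Omega mu p) G"
    unfolding G_def by measurable
  have "edge_state (fun_upd \<omega> (Ring 0) v) x t = edge_state \<omega> x t" for \<omega> v x
    by (rule edge_state_fun_upd) auto
  then have G_upd: "G (fun_upd \<omega> (Ring 0) v) = G \<omega>" for \<omega> v
    unfolding G_def by auto
  have "emeasure (Omega mu p) {\<omega>. G \<omega>} = emeasure (Omega mu p) {\<omega>. (\<lambda>y. edge_state \<omega> y t) \<in> A}"
  proof (rule emeasure_eq_AE)
    show "AE \<omega> in Omega mu p. \<omega> \<in> {\<omega>. G \<omega>} \<longleftrightarrow> \<omega> \<in> {\<omega>. (\<lambda>y. edge_state \<omega> y t) \<in> A}"
      using AE_Omega_expo_pos[OF mu, of p] by eventually_elim (auto simp: G_def less_imp_le)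
  qed (auto intro!: sets_Omega_Collect)
  also have "\<dots> = emeasure (pi_p p) A"
    using emeasure_edge_states[OF mu A, where e = "\<lambda>y. y"] by simp
  moreover have "emeasure (Omega mu p) {\<omega>. G \<omega> \<and> \<omega> (Ring 0) \<in> {t<..}}
      = emeasure (Omega mu p) {\<omega>. G \<omega>} * emeasure (src_dist mu p (Ring 0)) {t<..}"
    by (rule emeasure_Omega_component[OF mu _ _ G_upd]) auto
  ultimately have "ennreal (exp (- t)) * emeasure (pi_p p) A
      = emeasure (Omega mu p) {\<omega>. G \<omega> \<and> \<omega> (Ring 0) \<in> {t<..}}"
    using expo_greaterThan[of 1 t] t by (simp add: mult.commute)
  also have "\<dots> \<le> emeasure (Omega mu p) {\<omega>. env \<omega> t \<in> A}"
  proof (rule emeasure_mono)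
    show "{\<omega>. G \<omega> \<and> \<omega> (Ring 0) \<in> {t<..}} \<subseteq> {\<omega>. env \<omega> t \<in> A}"
    proof (rule subsetI)
      fix \<omega> assume "\<omega> \<in> {\<omega>. G \<omega> \<and> \<omega> (Ring 0) \<in> {t<..}}"
      then have "G \<omega>" and "t < \<omega> (Ring 0)" by auto
      then have "t < ring_time \<omega> n" for n
        using \<open>G \<omega>\<close> ring_time_mono[of \<omega> 0 n] by (auto simp: G_def ring_time_0)
      then have "{n. ring_time \<omega> n \<le> t} = {}"
        by (simp add: not_le)
      then have "walker_pos \<omega> t = 0"
        unfolding walker_pos_def by simp
      then show "\<omega> \<in> {\<omega>. env \<omega> t \<in> A}"
        using \<open>G \<omega>\<close> by (simp add: G_def env_def)
    qed
  qed (use A in \<open>auto intro: sets_Omega_Collect\<close>)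
  finally show ?thesis .
qed

subsection \<open>The first busy period of the infected set\<close>

text \<open>The infected set of the first busy period, followed ring by ring: residual \<omega> k is the
  time from the k-th ring until all copies created at rings 0..k have died, and busy \<omega> k says
  that each of the rings 1..k came before that happened, i.e. rings 0..k lie in one busy period.\<close>

primrec residual :: "(src \<Rightarrow> real) \<Rightarrow> nat \<Rightarrow> real" where
  "residual \<omega> 0 = max 0 (\<omega> (Life 0))"
| "residual \<omega> (Suc k) = max (residual \<omega> k - \<omega> (Ring (Suc k))) (max 0 (\<omega> (Life (Suc k))))"

primrec busy :: "(src \<Rightarrow> real) \<Rightarrow> nat \<Rightarrow> bool" where
  "busy \<omega> 0 = True"
| "busy \<omega> (Suc k) \<longleftrightarrow> busy \<omega> k \<and> \<omega> (Ring (Suc k)) \<le> residual \<omega> k"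

definition busy_last :: "(src \<Rightarrow> real) \<Rightarrow> nat" where
  "busy_last \<omega> = (LEAST n. \<not> busy \<omega> (Suc n))"

definition busy_end :: "(src \<Rightarrow> real) \<Rightarrow> real" where
  "busy_end \<omega> = ring_time \<omega> (busy_last \<omega>) + residual \<omega> (busy_last \<omega>)"

definition regular :: "(src \<Rightarrow> real) \<Rightarrow> bool" where
  "regular \<omega> \<longleftrightarrow> (\<forall>k. 0 < \<omega> (Ring k)) \<and> (\<forall>k. 0 < \<omega> (Life k)) \<and> (\<exists>n. \<not> busy \<omega> n)"

lemma residual_nonneg: "0 \<le> residual \<omega> k"
  by (induction k) auto

lemma busy_mono: "busy \<omega> k \<Longrightarrow> j \<le> k \<Longrightarrow> busy \<omega> j"
  by (induction k) (auto simp: le_Suc_eq)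

lemma ring_time_add_residual_Suc:
  "ring_time \<omega> (Suc k) + residual \<omega> (Suc k) =
    max (ring_time \<omega> k + residual \<omega> k) (ring_time \<omega> (Suc k) + max 0 (\<omega> (Life (Suc k))))"
  by (simp add: ring_time_Suc max_add_distrib_left)

lemma ring_time_add_Life_le:
  "j \<le> k \<Longrightarrow> ring_time \<omega> j + max 0 (\<omega> (Life j)) \<le> ring_time \<omega> k + residual \<omega> k"
proof (induction k)
  case (Suc k)
  then show ?case
    unfolding ring_time_add_residual_Suc by (auto simp: le_Suc_eq le_max_iff_disj)
qed simp

lemma regular_busy_last:
  assumes "regular \<omega>"
  shows "busy \<omega> (busy_last \<omega>)" and "\<not> busy \<omega> (Suc (busy_last \<omega>))"
proof -
  obtain n where "\<not> busy \<omega> n"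
    using assms by (auto simp: regular_def)
  then have "\<exists>n. \<not> busy \<omega> (Suc n)"
    by (cases n) auto
  then show "\<not> busy \<omega> (Suc (busy_last \<omega>))"
    unfolding busy_last_def by (rule LeastI_ex)
  show "busy \<omega> (busy_last \<omega>)"
  proof (cases "busy_last \<omega>")
    case (Suc n)
    then show ?thesis
      using not_less_Least[of n "\<lambda>n. \<not> busy \<omega> (Suc n)"] by (simp add: busy_last_def)
  qed simp
qed

lemma busy_end_not_infected:
  assumes "regular \<omega>"
  shows "\<not> infected \<omega> (busy_end \<omega>)"
proof
  assume "infected \<omega> (busy_end \<omega>)"
  then obtain i where i: "ring_time \<omega> i \<le> busy_end \<omega>" "busy_end \<omega> < ring_time \<omega> i + \<omega> (Life i)"
    unfolding infected_def by auto
  have R: "\<forall>k\<ge>1. 0 \<le> \<omega> (Ring k)"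
    using assms by (auto simp: regular_def less_imp_le)
  show False
  proof (cases "i \<le> busy_last \<omega>")
    case True
    then show False
      using ring_time_add_Life_le[OF True, of \<omega>] i by (simp add: busy_end_def)
  next
    case False
    then have "ring_time \<omega> (Suc (busy_last \<omega>)) \<le> ring_time \<omega> i"
      by (intro ring_time_mono[OF R]) auto
    moreover have "busy_end \<omega> < ring_time \<omega> (Suc (busy_last \<omega>))"
      using regular_busy_last[OF assms] by (auto simp: busy_end_def ring_time_Suc)
    ultimately show False
      using i by simp
  qed
qed

lemma busy_end_le_regeneration:
  assumes "regular \<omega>" and "infected \<omega> t'" and "t' < t" and "\<not> infected \<omega> t"
  shows "busy_end \<omega> \<le> t"
proof -
  have R: "\<forall>k\<ge>1. 0 \<le> \<omega> (Ring k)" and L: "\<forall>k. 0 < \<omega> (Life k)"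
    using assms(1) by (auto simp: regular_def less_imp_le)
  have dead: "ring_time \<omega> k + \<omega> (Life k) \<le> t" if "ring_time \<omega> k \<le> t" for k
    using assms(4) that unfolding infected_def by auto
  obtain i where "ring_time \<omega> i \<le> t'"
    using assms(2) unfolding infected_def by auto
  then have "ring_time \<omega> 0 \<le> t"
    using ring_time_mono[OF R, of 0 i] assms(3) by simp
  have "ring_time \<omega> k + residual \<omega> k \<le> t" if "k \<le> busy_last \<omega>" for k
    using that
  proof (induction k)
    case 0
    then show ?case
      using dead[OF \<open>ring_time \<omega> 0 \<le> t\<close>] L[rule_format, of 0] by simp
  next
    case (Suc k)
    then have "ring_time \<omega> k + residual \<omega> k \<le> t"
      by simp
    moreover have "busy \<omega> (Suc k)"
      using busy_mono[OF regular_busy_last(1)[OF assms(1)] Suc.prems] .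
    ultimately have "ring_time \<omega> (Suc k) \<le> t"
      by (simp add: ring_time_Suc)
    then show ?case
      using dead[of "Suc k"] L[rule_format, of "Suc k"] \<open>ring_time \<omega> k + residual \<omega> k \<le> t\<close>
      unfolding ring_time_add_residual_Suc by simp
  qed
  then show ?thesis
    by (simp add: busy_end_def)
qed

lemma tau1_eq_busy_end:
  assumes "regular \<omega>"
  shows "tau1 \<omega> = busy_end \<omega>"
  unfolding tau1_def
proof (rule cInf_eq_minimum)
  have L: "0 < \<omega> (Life 0)" and "0 < \<omega> (Ring 0)"
    using assms by (auto simp: regular_def)
  then have "0 < ring_time \<omega> 0"
    by (simp add: ring_time_0)
  moreover have "ring_time \<omega> 0 < busy_end \<omega>"
    using ring_time_add_Life_le[of 0 "busy_last \<omega>" \<omega>] L by (simp add: busy_end_def)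
  moreover have "infected \<omega> (ring_time \<omega> 0)"
    unfolding infected_def using L by (intro exI[of _ 0]) auto
  ultimately show "busy_end \<omega> \<in> {t. 0 < t \<and> \<not> infected \<omega> t \<and> (\<exists>t'<t. infected \<omega> t')}"
    using busy_end_not_infected[OF assms] by auto
qed (use busy_end_le_regeneration[OF assms] in blast)

lemma measurable_residual[measurable]: "(\<lambda>\<omega>. residual \<omega> k) \<in> borel_measurable (Omega mu p)"
proof (induction k)
  case (Suc k)
  note [measurable] = Suc.IH
  show ?case
    unfolding residual.simps by measurable
qed simp

lemma pred_busy[measurable]: "Measurable.pred (Omega mu p) (\<lambda>\<omega>. busy \<omega> k)"
proof (induction k)
  case (Suc k)
  note [measurable] = Suc.IH
  have [measurable]: "Measurable.pred (Omega mu p) (\<lambda>\<omega>. \<omega> (Ring (Suc k)) \<le> residual \<omega> k)"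
    using borel_measurable_le[OF measurable_Omega_component measurable_residual] by (simp add: pred_def)
  show ?case
    unfolding busy.simps by measurable
qed simp

lemma measurable_busy_end[measurable]: "busy_end \<in> borel_measurable (Omega mu p)"
proof -
  have "busy_last \<in> measurable (Omega mu p) (count_space UNIV)"
    unfolding busy_last_def by measurable
  then have "(\<lambda>\<omega>. (\<lambda>n \<omega>. ring_time \<omega> n + residual \<omega> n) (busy_last \<omega>) \<omega>) \<in> borel_measurable (Omega mu p)"
    by (rule measurable_compose_countable'[rotated]) auto
  then show ?thesis unfolding busy_end_def by simp
qed

lemma residual_fun_upd:
  "(\<And>j. j \<le> k \<Longrightarrow> i \<noteq> Ring j \<and> i \<noteq> Life j) \<Longrightarrow> residual (fun_upd \<omega> i v) k = residual \<omega> k"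
proof (induction k)
  case (Suc k)
  have "residual (fun_upd \<omega> i v) k = residual \<omega> k"
    using Suc.prems by (intro Suc.IH) simp
  moreover have "Ring (Suc k) \<noteq> i" "Life (Suc k) \<noteq> i"
    using Suc.prems[of "Suc k"] by auto
  ultimately show ?case
    by (simp del: fun_upd_apply add: fun_upd_other)
qed auto

lemma busy_fun_upd:
  "(\<And>j. j \<le> k \<Longrightarrow> i \<noteq> Ring j \<and> i \<noteq> Life j) \<Longrightarrow> busy (fun_upd \<omega> i v) k = busy \<omega> k"
proof (induction k)
  case (Suc k)
  have "Ring (Suc k) \<noteq> i"
    using Suc.prems[of "Suc k"] by auto
  moreover have "residual (fun_upd \<omega> i v) k = residual \<omega> k"
    using Suc.prems by (intro residual_fun_upd) auto
  moreover have "busy (fun_upd \<omega> i v) k = busy \<omega> k"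
    using Suc.prems by (intro Suc.IH) simp
  ultimately show ?case
    by (simp del: fun_upd_apply add: fun_upd_other)
qed simp

subsection \<open>Geometric decay of the busy period\<close>

lemma Lyapunov_inequality:
  fixes \<theta> \<beta> \<delta> d d0 :: real
  assumes \<delta>: "0 < \<delta>" "\<delta> \<le> (1 - \<beta>) / 2" "4 * \<delta> \<le> exp (- d0)"
    and d0: "4 \<le> (1 - \<beta>) / 2 * exp (\<theta> * d0)" and \<theta>: "0 < \<theta>" and d: "0 \<le> d"
  shows "(1 / \<delta> + 3) * (1 - exp (- d)) + \<beta> * exp (\<theta> * d) \<le> (1 - \<delta>) * (1 / \<delta> + exp (\<theta> * d))"
proof -
  define E where "E = exp (\<theta> * d)"
  have "(1 / \<delta> + 3) * (1 - exp (- d)) + \<beta> * E - (1 - \<delta>) * (1 / \<delta> + E)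
      = 4 - (1 / \<delta> + 3) * exp (- d) - (1 - \<beta> - \<delta>) * E"
    using \<delta>(1) by (simp add: field_simps)
  also have "\<dots> \<le> 0"
  proof (cases "d0 \<le> d")
    case True
    then have "exp (\<theta> * d0) \<le> E"
      using \<theta> by (simp add: E_def)
    then have "(1 - \<beta>) / 2 * exp (\<theta> * d0) \<le> (1 - \<beta>) / 2 * E"
      using \<delta>(1,2) by (intro mult_left_mono) simp_all
    also have "\<dots> \<le> (1 - \<beta> - \<delta>) * E"
      using \<delta>(2) by (intro mult_right_mono) (simp_all add: E_def)
    finally have "4 \<le> (1 - \<beta> - \<delta>) * E"
      using d0 by simp
    moreover have "0 \<le> (1 / \<delta> + 3) * exp (- d)"
      using \<delta>(1) by simp
    ultimately show ?thesis by simp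
  next
    case False
    then have "(1 / \<delta>) * exp (- d0) \<le> (1 / \<delta> + 3) * exp (- d)"
      using \<delta>(1) by (intro mult_mono) auto
    moreover have "4 \<le> (1 / \<delta>) * exp (- d0)"
      using \<delta>(1,3) by (simp add: field_simps)
    moreover have "0 \<le> (1 - \<beta> - \<delta>) * E"
      using \<delta>(1,2) by (intro mult_nonneg_nonneg) (simp_all add: E_def)
    ultimately show ?thesis by simp
  qed
  finally show ?thesis
    by (simp add: E_def)
qed

lemma exists_Lyapunov_constants:
  fixes \<theta> \<beta> :: real
  assumes \<theta>: "0 < \<theta>" and \<beta>: "0 \<le> \<beta>" "\<beta> < 1"
  obtains a \<rho> where "0 < a" and "0 < \<rho>" and "\<rho> < 1"
    and "\<And>d. 0 \<le> d \<Longrightarrow> (a + 3) * (1 - exp (- d)) + \<beta> * exp (\<theta> * d) \<le> \<rho> * (a + exp (\<theta> * d))"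
proof -
  define d0 where "d0 = ln (8 / (1 - \<beta>)) / \<theta>"
  define \<delta> where "\<delta> = min ((1 - \<beta>) / 2) (exp (- d0) / 4)"
  have "exp (\<theta> * d0) = 8 / (1 - \<beta>)"
    using \<theta> \<beta> by (simp add: d0_def)
  then have "4 \<le> (1 - \<beta>) / 2 * exp (\<theta> * d0)"
    using \<beta> by (simp add: field_simps)
  moreover have "0 < \<delta>" "\<delta> \<le> (1 - \<beta>) / 2" "4 * \<delta> \<le> exp (- d0)"
    using \<beta> by (auto simp: \<delta>_def min_def)
  moreover have "\<delta> < 1"
    using \<beta> \<open>\<delta> \<le> (1 - \<beta>) / 2\<close> by (simp add: field_simps)
  ultimately show ?thesis
    using Lyapunov_inequality[of \<delta> \<beta> d0 \<theta>] \<theta> by (intro that[of "1 / \<delta>" "1 - \<delta>"]) auto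
qed

lemma exp_max_le: "exp (t * max x y) \<le> exp (t * x) + exp (t * y)" if "0 \<le> t" for t x y :: real
  using that by (cases "x \<le> y") (auto simp: max_def mult_left_mono add_nonneg_nonneg less_imp_le
      intro: add_increasing add_increasing2)

definition busy_weight :: "real \<Rightarrow> real \<Rightarrow> (src \<Rightarrow> real) \<Rightarrow> nat \<Rightarrow> ennreal" where
  "busy_weight mu a \<omega> k = of_bool (busy \<omega> k) * ennreal (a + exp (mu / 2 * residual \<omega> k))"

lemma measurable_busy_weight[measurable]: "(\<lambda>\<omega>. busy_weight mu a \<omega> k) \<in> borel_measurable (Omega mu p)"
  unfolding busy_weight_def by measurable

lemma busy_weight_Suc_le:
  assumes mu: "0 < mu" and a: "0 \<le> a"
  shows "busy_weight mu a \<omega> (Suc k)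
    \<le> of_bool (busy \<omega> k \<and> \<omega> (Ring (Suc k)) \<le> residual \<omega> k) * ennreal (a + 1 + exp (mu / 2 * \<omega> (Life (Suc k))))
      + of_bool (busy \<omega> k) * ennreal (exp (mu / 2 * residual \<omega> k)) * ennreal (exp (- (mu / 2) * \<omega> (Ring (Suc k))))"
proof (cases "busy \<omega> (Suc k)")
  case True
  define D R L where "D = residual \<omega> k" and "R = \<omega> (Ring (Suc k))" and "L = \<omega> (Life (Suc k))"
  have "exp (mu / 2 * max (D - R) (max 0 L)) \<le> exp (mu / 2 * (D - R)) + exp (mu / 2 * max 0 L)"
    using mu by (intro exp_max_le) simp
  moreover have "exp (mu / 2 * max 0 L) \<le> 1 + exp (mu / 2 * L)"
    using exp_max_le[of "mu / 2" 0 L] mu by simp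
  moreover have "exp (mu / 2 * (D - R)) = exp (mu / 2 * D) * exp (- (mu / 2) * R)"
    by (subst mult_exp_exp) (simp add: right_diff_distrib)
  ultimately have "a + exp (mu / 2 * max (D - R) (max 0 L)) \<le> (a + 1 + exp (mu / 2 * L)) + exp (mu / 2 * D) * exp (- (mu / 2) * R)"
    by simp
  then have "ennreal (a + exp (mu / 2 * max (D - R) (max 0 L)))
      \<le> ennreal (a + 1 + exp (mu / 2 * L)) + ennreal (exp (mu / 2 * D)) * ennreal (exp (- (mu / 2) * R))"
    using a by (simp add: ennreal_plus[symmetric] ennreal_mult[symmetric] ennreal_leI del: ennreal_plus)
  then show ?thesis
    using True by (simp add: busy_weight_def D_def R_def L_def)
qed (auto simp: busy_weight_def)

lemma nn_integral_busy_Life: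
  assumes mu: "0 < mu" and a: "0 \<le> a"
  shows "(\<integral>\<^sup>+\<omega>. of_bool (busy \<omega> k \<and> \<omega> (Ring (Suc k)) \<le> residual \<omega> k) * ennreal (a + 1 + exp (mu / 2 * \<omega> (Life (Suc k)))) \<partial>Omega mu p)
    = ennreal (a + 3) * (\<integral>\<^sup>+\<omega>. of_bool (busy \<omega> k) * ennreal (1 - exp (- residual \<omega> k)) \<partial>Omega mu p)"
proof -
  define G where "G \<omega> = (of_bool (busy \<omega> k \<and> \<omega> (Ring (Suc k)) \<le> residual \<omega> k) :: ennreal)" for \<omega>
  have [measurable]: "Measurable.pred (Omega mu p) (\<lambda>\<omega>. \<omega> (Ring (Suc k)) \<le> residual \<omega> k)"
    using borel_measurable_le[OF measurable_Omega_component measurable_residual] by (simp add: pred_def)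
  have [measurable]: "G \<in> borel_measurable (Omega mu p)"
    unfolding G_def by measurable
  have "G (fun_upd \<omega> (Life (Suc k)) v) = G \<omega>" for \<omega> v
    by (simp add: G_def busy_fun_upd residual_fun_upd fun_upd_other del: fun_upd_apply)
  then have "(\<integral>\<^sup>+\<omega>. G \<omega> * ennreal (a + 1 + exp (mu / 2 * \<omega> (Life (Suc k)))) \<partial>Omega mu p)
      = (\<integral>\<^sup>+\<omega>. G \<omega> \<partial>Omega mu p) * (\<integral>\<^sup>+x. ennreal (a + 1 + exp (mu / 2 * x)) \<partial>expo mu)"
    by (subst nn_integral_Omega_mult_component[OF mu]) auto
  also have "(\<integral>\<^sup>+x. ennreal (a + 1 + exp (mu / 2 * x)) \<partial>expo mu) = ennreal (a + 3)"
    using nn_integral_expo_const_add_exp[OF mu, of "a + 1"] a by simp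
  also have "(\<integral>\<^sup>+\<omega>. G \<omega> \<partial>Omega mu p)
      = (\<integral>\<^sup>+\<omega>. (\<integral>\<^sup>+x. G (fun_upd \<omega> (Ring (Suc k)) x) \<partial>expo 1) \<partial>Omega mu p)"
    using nn_integral_Omega_fun_upd[OF mu, of G p "Ring (Suc k)"] by simp
  also have "\<dots> = (\<integral>\<^sup>+\<omega>. of_bool (busy \<omega> k) * ennreal (1 - exp (- residual \<omega> k)) \<partial>Omega mu p)"
  proof (rule nn_integral_cong)
    fix \<omega>
    have "(\<integral>\<^sup>+x. G (fun_upd \<omega> (Ring (Suc k)) x) \<partial>expo 1)
        = (\<integral>\<^sup>+x. of_bool (busy \<omega> k) * indicator {..residual \<omega> k} x \<partial>expo 1)"
      by (intro nn_integral_cong)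
        (simp add: G_def busy_fun_upd residual_fun_upd indicator_def fun_upd_same del: fun_upd_apply)
    also have "\<dots> = of_bool (busy \<omega> k) * emeasure (expo 1) {..residual \<omega> k}"
      by (rule nn_integral_cmult_indicator) (simp add: expo_def)
    also have "emeasure (expo 1) {..residual \<omega> k} = ennreal (1 - exp (- residual \<omega> k))"
      using expo_atMost[of 1 "residual \<omega> k"] residual_nonneg by simp
    finally show "(\<integral>\<^sup>+x. G (fun_upd \<omega> (Ring (Suc k)) x) \<partial>expo 1)
        = of_bool (busy \<omega> k) * ennreal (1 - exp (- residual \<omega> k))" .
  qed
  finally show ?thesis
    by (simp add: G_def mult.commute)
qed

lemma nn_integral_busy_exp_Ring:
  assumes mu: "0 < mu"
  shows "(\<integral>\<^sup>+\<omega>. of_bool (busy \<omega> k) * ennreal (exp (mu / 2 * residual \<omega> k)) * ennreal (exp (- (mu / 2) * \<omega> (Ring (Suc k)))) \<partial>Omega mu p)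
    = ennreal (1 / (1 + mu / 2)) * (\<integral>\<^sup>+\<omega>. of_bool (busy \<omega> k) * ennreal (exp (mu / 2 * residual \<omega> k)) \<partial>Omega mu p)"
proof -
  have "(\<integral>\<^sup>+\<omega>. of_bool (busy \<omega> k) * ennreal (exp (mu / 2 * residual \<omega> k)) * ennreal (exp (- (mu / 2) * \<omega> (Ring (Suc k)))) \<partial>Omega mu p)
    = (\<integral>\<^sup>+\<omega>. of_bool (busy \<omega> k) * ennreal (exp (mu / 2 * residual \<omega> k)) \<partial>Omega mu p)
      * (\<integral>\<^sup>+x. ennreal (exp (- (mu / 2) * x)) \<partial>expo 1)"
    by (subst nn_integral_Omega_mult_component[OF mu])
      (auto simp: busy_fun_upd residual_fun_upd simp del: fun_upd_apply)
  also have "(\<integral>\<^sup>+x. ennreal (exp (- (mu / 2) * x)) \<partial>expo 1) = ennreal (1 / (1 + mu / 2))"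
    using nn_integral_expo_exp[of 1 "- (mu / 2)"] mu by simp
  finally show ?thesis
    by (simp add: mult.commute)
qed

lemma busy_weight_drift_le:
  assumes mu: "0 < mu" and a: "0 < a" and \<rho>: "0 < \<rho>"
    and ineq: "\<And>d. 0 \<le> d \<Longrightarrow> (a + 3) * (1 - exp (- d)) + (1 / (1 + mu / 2)) * exp (mu / 2 * d)
      \<le> \<rho> * (a + exp (mu / 2 * d))"
  shows "ennreal (a + 3) * (of_bool (busy \<omega> k) * ennreal (1 - exp (- residual \<omega> k)))
      + ennreal (1 / (1 + mu / 2)) * (of_bool (busy \<omega> k) * ennreal (exp (mu / 2 * residual \<omega> k)))
    \<le> ennreal \<rho> * busy_weight mu a \<omega> k"
proof (cases "busy \<omega> k")
  case True
  define D where "D = residual \<omega> k"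
  have "0 \<le> 1 - exp (- D)" "0 \<le> 1 / (1 + mu / 2)"
    using residual_nonneg[of \<omega> k] mu by (simp_all add: D_def)
  moreover have "0 \<le> (a + 3) * (1 - exp (- D))" "0 \<le> (1 / (1 + mu / 2)) * exp (mu / 2 * D)"
    using a \<open>0 \<le> 1 - exp (- D)\<close> \<open>0 \<le> 1 / (1 + mu / 2)\<close> by simp_all
  ultimately have "ennreal (a + 3) * ennreal (1 - exp (- D)) + ennreal (1 / (1 + mu / 2)) * ennreal (exp (mu / 2 * D))
      = ennreal ((a + 3) * (1 - exp (- D)) + (1 / (1 + mu / 2)) * exp (mu / 2 * D))"
    using a by (simp only: ennreal_plus ennreal_mult exp_ge_zero)
  also have "\<dots> \<le> ennreal (\<rho> * (a + exp (mu / 2 * D)))"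
    using ineq[OF residual_nonneg] by (intro ennreal_leI) (simp add: D_def)
  also have "\<dots> = ennreal \<rho> * ennreal (a + exp (mu / 2 * D))"
    using \<rho> a by (simp add: ennreal_mult)
  finally show ?thesis
    using True by (simp add: busy_weight_def D_def)
qed (simp add: busy_weight_def)

lemma nn_integral_busy_weight_Suc_le:
  assumes mu: "0 < mu" and a: "0 < a" and \<rho>: "0 < \<rho>"
    and ineq: "\<And>d. 0 \<le> d \<Longrightarrow> (a + 3) * (1 - exp (- d)) + (1 / (1 + mu / 2)) * exp (mu / 2 * d)
      \<le> \<rho> * (a + exp (mu / 2 * d))"
  shows "(\<integral>\<^sup>+\<omega>. busy_weight mu a \<omega> (Suc k) \<partial>Omega mu p) \<le> ennreal \<rho> * (\<integral>\<^sup>+\<omega>. busy_weight mu a \<omega> k \<partial>Omega mu p)"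
proof -
  define B where "B \<omega> = (of_bool (busy \<omega> k) :: ennreal)" for \<omega>
  define E where "E \<omega> = exp (mu / 2 * residual \<omega> k)" for \<omega>
  define F where "F \<omega> = ennreal (1 - exp (- residual \<omega> k))" for \<omega>
  define c where "c = 1 / (1 + mu / 2)"
  have [measurable]: "Measurable.pred (Omega mu p) (\<lambda>\<omega>. \<omega> (Ring (Suc k)) \<le> residual \<omega> k)"
    using borel_measurable_le[OF measurable_Omega_component measurable_residual] by (simp add: pred_def)
  have [measurable]: "B \<in> borel_measurable (Omega mu p)" "E \<in> borel_measurable (Omega mu p)"
    "F \<in> borel_measurable (Omega mu p)"
    unfolding B_def E_def F_def by measurable
  have pointwise: "ennreal (a + 3) * (B \<omega> * F \<omega>) + ennreal c * (B \<omega> * ennreal (E \<omega>))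
      \<le> ennreal \<rho> * busy_weight mu a \<omega> k" for \<omega>
    unfolding B_def E_def F_def c_def using mu a \<rho> ineq by (rule busy_weight_drift_le)
  have "(\<integral>\<^sup>+\<omega>. busy_weight mu a \<omega> (Suc k) \<partial>Omega mu p)
      \<le> (\<integral>\<^sup>+\<omega>. of_bool (busy \<omega> k \<and> \<omega> (Ring (Suc k)) \<le> residual \<omega> k) * ennreal (a + 1 + exp (mu / 2 * \<omega> (Life (Suc k))))
        + B \<omega> * ennreal (E \<omega>) * ennreal (exp (- (mu / 2) * \<omega> (Ring (Suc k)))) \<partial>Omega mu p)"
    using busy_weight_Suc_le[OF mu less_imp_le[OF a]] by (intro nn_integral_mono) (simp add: B_def E_def)
  also have "\<dots> = (\<integral>\<^sup>+\<omega>. of_bool (busy \<omega> k \<and> \<omega> (Ring (Suc k)) \<le> residual \<omega> k) * ennreal (a + 1 + exp (mu / 2 * \<omega> (Life (Suc k)))) \<partial>Omega mu p)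
      + (\<integral>\<^sup>+\<omega>. B \<omega> * ennreal (E \<omega>) * ennreal (exp (- (mu / 2) * \<omega> (Ring (Suc k)))) \<partial>Omega mu p)"
    by (rule nn_integral_add) auto
  also have "(\<integral>\<^sup>+\<omega>. of_bool (busy \<omega> k \<and> \<omega> (Ring (Suc k)) \<le> residual \<omega> k) * ennreal (a + 1 + exp (mu / 2 * \<omega> (Life (Suc k)))) \<partial>Omega mu p)
      = ennreal (a + 3) * (\<integral>\<^sup>+\<omega>. B \<omega> * F \<omega> \<partial>Omega mu p)"
    unfolding B_def F_def by (rule nn_integral_busy_Life[OF mu less_imp_le[OF a]])
  also have "(\<integral>\<^sup>+\<omega>. B \<omega> * ennreal (E \<omega>) * ennreal (exp (- (mu / 2) * \<omega> (Ring (Suc k)))) \<partial>Omega mu p)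
      = ennreal c * (\<integral>\<^sup>+\<omega>. B \<omega> * ennreal (E \<omega>) \<partial>Omega mu p)"
    unfolding B_def E_def c_def by (rule nn_integral_busy_exp_Ring[OF mu])
  also have "ennreal (a + 3) * (\<integral>\<^sup>+\<omega>. B \<omega> * F \<omega> \<partial>Omega mu p) + ennreal c * (\<integral>\<^sup>+\<omega>. B \<omega> * ennreal (E \<omega>) \<partial>Omega mu p)
      = (\<integral>\<^sup>+\<omega>. ennreal (a + 3) * (B \<omega> * F \<omega>) \<partial>Omega mu p)
      + (\<integral>\<^sup>+\<omega>. ennreal c * (B \<omega> * ennreal (E \<omega>)) \<partial>Omega mu p)"
  proof -
    have "(\<lambda>\<omega>. B \<omega> * F \<omega>) \<in> borel_measurable (Omega mu p)"
      "(\<lambda>\<omega>. B \<omega> * ennreal (E \<omega>)) \<in> borel_measurable (Omega mu p)"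
      by measurable
    then show ?thesis
      by (simp only: nn_integral_cmult)
  qed
  also have "\<dots> = (\<integral>\<^sup>+\<omega>. ennreal (a + 3) * (B \<omega> * F \<omega>) + ennreal c * (B \<omega> * ennreal (E \<omega>)) \<partial>Omega mu p)"
    by (rule nn_integral_add[symmetric]) auto
  also have "\<dots> \<le> (\<integral>\<^sup>+\<omega>. ennreal \<rho> * busy_weight mu a \<omega> k \<partial>Omega mu p)"
    using pointwise by (rule nn_integral_mono)
  also have "\<dots> = ennreal \<rho> * (\<integral>\<^sup>+\<omega>. busy_weight mu a \<omega> k \<partial>Omega mu p)"
    by (simp add: nn_integral_cmult)
  finally show ?thesis .
qed

lemma nn_integral_busy_weight_0_le:
  assumes mu: "0 < mu" and a: "0 \<le> a"
  shows "(\<integral>\<^sup>+\<omega>. busy_weight mu a \<omega> 0 \<partial>Omega mu p) \<le> ennreal (a + 3)"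
proof -
  have "(\<integral>\<^sup>+\<omega>. busy_weight mu a \<omega> 0 \<partial>Omega mu p)
      \<le> (\<integral>\<^sup>+\<omega>. ennreal (a + 1 + exp (mu / 2 * \<omega> (Life 0))) \<partial>Omega mu p)"
  proof (rule nn_integral_mono)
    fix \<omega>
    have "exp (mu / 2 * max 0 (\<omega> (Life 0))) \<le> 1 + exp (mu / 2 * \<omega> (Life 0))"
      using exp_max_le[of "mu / 2" 0 "\<omega> (Life 0)"] mu by simp
    then show "busy_weight mu a \<omega> 0 \<le> ennreal (a + 1 + exp (mu / 2 * \<omega> (Life 0)))"
      by (simp add: busy_weight_def ennreal_leI)
  qed
  also have "\<dots> = ennreal (a + 3)"
    using nn_integral_expo_const_add_exp[OF mu, of "a + 1"] a
    by (subst nn_integral_Omega_component[OF mu]) simp_all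
  finally show ?thesis .
qed

lemma emeasure_busy_le_busy_weight:
  assumes "0 \<le> a"
  shows "ennreal a * emeasure (Omega mu p) {\<omega>. busy \<omega> k} \<le> (\<integral>\<^sup>+\<omega>. busy_weight mu a \<omega> k \<partial>Omega mu p)"
proof -
  have "ennreal a * emeasure (Omega mu p) {\<omega>. busy \<omega> k}
      = (\<integral>\<^sup>+\<omega>. ennreal a * indicator {\<omega>. busy \<omega> k} \<omega> \<partial>Omega mu p)"
    by (subst nn_integral_cmult_indicator) (auto intro: sets_Omega_Collect)
  also have "\<dots> \<le> (\<integral>\<^sup>+\<omega>. busy_weight mu a \<omega> k \<partial>Omega mu p)"
    using assms by (intro nn_integral_mono) (auto simp: busy_weight_def indicator_def intro!: ennreal_leI)
  finally show ?thesis .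
qed

lemma emeasure_busy_le_geometric:
  assumes mu: "0 < mu"
  obtains C \<rho> where "0 \<le> C" and "0 < \<rho>" and "\<rho> < 1"
    and "\<And>k. emeasure (Omega mu p) {\<omega>. busy \<omega> k} \<le> ennreal (C * \<rho> ^ k)"
proof -
  have \<theta>: "0 < mu / 2" and \<beta>: "0 \<le> 1 / (1 + mu / 2)" "1 / (1 + mu / 2) < 1"
    using mu by (auto simp: field_simps)
  obtain a \<rho> where a: "0 < a" and \<rho>: "0 < \<rho>" "\<rho> < 1"
    and ineq: "\<And>d. 0 \<le> d \<Longrightarrow> (a + 3) * (1 - exp (- d)) + (1 / (1 + mu / 2)) * exp (mu / 2 * d)
      \<le> \<rho> * (a + exp (mu / 2 * d))"
    using exists_Lyapunov_constants[OF \<theta> \<beta>] by blast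
  have "(\<integral>\<^sup>+\<omega>. busy_weight mu a \<omega> 0 \<partial>Omega mu p) \<le> ennreal (a + 3)"
    using mu a by (rule nn_integral_busy_weight_0_le[OF _ less_imp_le])
  then have "(\<integral>\<^sup>+\<omega>. busy_weight mu a \<omega> k \<partial>Omega mu p) \<le> ennreal ((a + 3) * \<rho> ^ k)" for k
  proof (induction k)
    case (Suc k)
    have "(\<integral>\<^sup>+\<omega>. busy_weight mu a \<omega> (Suc k) \<partial>Omega mu p)
        \<le> ennreal \<rho> * (\<integral>\<^sup>+\<omega>. busy_weight mu a \<omega> k \<partial>Omega mu p)"
      by (rule nn_integral_busy_weight_Suc_le[OF mu a \<rho>(1) ineq])
    also have "\<dots> \<le> ennreal \<rho> * ennreal ((a + 3) * \<rho> ^ k)"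
      using Suc by (intro mult_left_mono) auto
    finally show ?case
      using \<rho> a by (simp add: ennreal_mult[symmetric] mult.left_commute del: ennreal_mult)
  qed simp
  moreover have "ennreal a * emeasure (Omega mu p) {\<omega>. busy \<omega> k} \<le> (\<integral>\<^sup>+\<omega>. busy_weight mu a \<omega> k \<partial>Omega mu p)" for k
    using a by (intro emeasure_busy_le_busy_weight) simp
  ultimately have "ennreal a * emeasure (Omega mu p) {\<omega>. busy \<omega> k} \<le> ennreal ((a + 3) * \<rho> ^ k)" for k
    by (blast intro: order_trans)
  then have "ennreal (1 / a) * (ennreal a * emeasure (Omega mu p) {\<omega>. busy \<omega> k})
      \<le> ennreal (1 / a) * ennreal ((a + 3) * \<rho> ^ k)" for k
    by (rule mult_left_mono) simp
  moreover have "ennreal (1 / a) * ennreal a = 1"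
    using a by (simp add: ennreal_mult[symmetric])
  moreover have "ennreal (1 / a) * ennreal ((a + 3) * \<rho> ^ k) = ennreal ((a + 3) / a * \<rho> ^ k)" for k
    using a \<rho> by (simp add: ennreal_mult[symmetric])
  ultimately have "emeasure (Omega mu p) {\<omega>. busy \<omega> k} \<le> ennreal ((a + 3) / a * \<rho> ^ k)" for k
    by (simp add: mult.assoc[symmetric])
  moreover have "0 \<le> (a + 3) / a"
    using a by simp
  ultimately show ?thesis
    using that \<rho> by blast
qed

lemma AE_busy_period_ends:
  assumes mu: "0 < mu"
  shows "AE \<omega> in Omega mu p. \<exists>n. \<not> busy \<omega> n"
proof -
  interpret prob_space "Omega mu p" by (rule prob_space_Omega[OF mu])
  obtain C \<rho> where C: "0 \<le> C" and \<rho>: "0 < \<rho>" "\<rho> < 1"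
    and bound: "\<And>k. emeasure (Omega mu p) {\<omega>. busy \<omega> k} \<le> ennreal (C * \<rho> ^ k)"
    using emeasure_busy_le_geometric[OF mu] by blast
  have S: "{\<omega>. \<forall>n. busy \<omega> n} \<in> sets (Omega mu p)"
    by (rule sets_Omega_Collect) measurable
  have "measure (Omega mu p) {\<omega>. \<forall>n. busy \<omega> n} \<le> C * \<rho> ^ k" for k
  proof -
    have "emeasure (Omega mu p) {\<omega>. \<forall>n. busy \<omega> n} \<le> emeasure (Omega mu p) {\<omega>. busy \<omega> k}"
      by (rule emeasure_mono) (auto intro: sets_Omega_Collect)
    also have "\<dots> \<le> ennreal (C * \<rho> ^ k)"
      by (rule bound)
    finally show ?thesis
      using C \<rho> by (simp add: emeasure_eq_measure)
  qed
  moreover have "(\<lambda>k. C * \<rho> ^ k) \<longlonglongrightarrow> 0"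
    using \<rho> by (intro tendsto_mult_right_zero LIMSEQ_power_zero) auto
  ultimately have "measure (Omega mu p) {\<omega>. \<forall>n. busy \<omega> n} \<le> 0"
    by (intro LIMSEQ_le_const) auto
  then have "emeasure (Omega mu p) {\<omega>. \<forall>n. busy \<omega> n} = 0"
    by (simp add: emeasure_eq_measure measure_nonneg antisym)
  then show ?thesis
    by (subst AE_iff_measurable[OF S]) auto
qed

lemma AE_regular: "0 < mu \<Longrightarrow> AE \<omega> in Omega mu p. regular \<omega>"
  using AE_Omega_expo_pos[of mu p] AE_busy_period_ends[of mu p]
  unfolding regular_def by (simp add: AE_conj_iff)

lemma AE_tau1_eq_busy_end: "0 < mu \<Longrightarrow> AE \<omega> in Omega mu p. tau1 \<omega> = busy_end \<omega>"
  using AE_regular by (rule AE_mp) (auto intro: tau1_eq_busy_end)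

text \<open>The busy period is over before the first ring that is not busy.\<close>

lemma busy_end_le_sum:
  assumes "regular \<omega>"
  shows "ennreal (busy_end \<omega>)
    \<le> ennreal (\<omega> (Ring 0)) + (\<Sum>j. of_bool (busy \<omega> j) * ennreal (\<omega> (Ring (Suc j))))"
proof -
  define n where "n = busy_last \<omega>"
  have R: "\<And>k. 0 < \<omega> (Ring k)"
    using assms by (simp add: regular_def)
  have "busy_end \<omega> \<le> ring_time \<omega> (Suc n)"
    using regular_busy_last[OF assms] by (simp add: busy_end_def n_def ring_time_Suc)
  also have "\<dots> = \<omega> (Ring 0) + (\<Sum>j\<le>n. \<omega> (Ring (Suc j)))"
    unfolding ring_time_def by (rule sum.atMost_Suc_shift)
  finally have "ennreal (busy_end \<omega>) \<le> ennreal (\<omega> (Ring 0) + (\<Sum>j\<le>n. \<omega> (Ring (Suc j))))"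
    by (rule ennreal_leI)
  also have "\<dots> = ennreal (\<omega> (Ring 0)) + (\<Sum>j\<le>n. ennreal (\<omega> (Ring (Suc j))))"
    using R by (subst ennreal_plus) (simp_all add: sum_nonneg less_imp_le sum_ennreal)
  also have "(\<Sum>j\<le>n. ennreal (\<omega> (Ring (Suc j)))) = (\<Sum>j\<le>n. of_bool (busy \<omega> j) * ennreal (\<omega> (Ring (Suc j))))"
    using busy_mono[OF regular_busy_last(1)[OF assms]] by (intro sum.cong) (auto simp: n_def)
  also have "\<dots> \<le> (\<Sum>j. of_bool (busy \<omega> j) * ennreal (\<omega> (Ring (Suc j))))"
    by (rule sum_le_suminf) auto
  finally show ?thesis
    by (simp add: add_left_mono)
qed

lemma nn_integral_busy_end_finite:
  assumes mu: "0 < mu"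
  shows "(\<integral>\<^sup>+\<omega>. ennreal (busy_end \<omega>) \<partial>Omega mu p) < \<infinity>"
proof -
  obtain C \<rho> where C: "0 \<le> C" and \<rho>: "0 < \<rho>" "\<rho> < 1"
    and bound: "\<And>k. emeasure (Omega mu p) {\<omega>. busy \<omega> k} \<le> ennreal (C * \<rho> ^ k)"
    using emeasure_busy_le_geometric[OF mu] by blast
  have Ring_mean: "(\<integral>\<^sup>+x. ennreal x \<partial>src_dist mu p (Ring k)) = 1" for k
    using nn_integral_expo_id[of 1] by simp
  have "(\<integral>\<^sup>+\<omega>. ennreal (busy_end \<omega>) \<partial>Omega mu p)
      \<le> (\<integral>\<^sup>+\<omega>. ennreal (\<omega> (Ring 0)) + (\<Sum>j. of_bool (busy \<omega> j) * ennreal (\<omega> (Ring (Suc j)))) \<partial>Omega mu p)"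
    using AE_regular[OF mu, of p] by (rule nn_integral_mono_AE[OF AE_mp]) (auto intro: busy_end_le_sum)
  also have "\<dots> = (\<integral>\<^sup>+\<omega>. ennreal (\<omega> (Ring 0)) \<partial>Omega mu p)
      + (\<Sum>j. \<integral>\<^sup>+\<omega>. of_bool (busy \<omega> j) * ennreal (\<omega> (Ring (Suc j))) \<partial>Omega mu p)"
    by (simp add: nn_integral_add nn_integral_suminf)
  also have "\<dots> = 1 + (\<Sum>j. emeasure (Omega mu p) {\<omega>. busy \<omega> j})"
  proof -
    have "(\<integral>\<^sup>+\<omega>. of_bool (busy \<omega> j) * ennreal (\<omega> (Ring (Suc j))) \<partial>Omega mu p)
        = emeasure (Omega mu p) {\<omega>. busy \<omega> j}" for j
    proof -
      have "(\<integral>\<^sup>+\<omega>. of_bool (busy \<omega> j) * ennreal (\<omega> (Ring (Suc j))) \<partial>Omega mu p)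
          = (\<integral>\<^sup>+\<omega>. of_bool (busy \<omega> j) \<partial>Omega mu p)"
        using Ring_mean by (subst nn_integral_Omega_mult_component[OF mu])
          (auto simp: busy_fun_upd simp del: fun_upd_apply)
      also have "\<dots> = emeasure (Omega mu p) {\<omega>. busy \<omega> j}"
        by (subst nn_integral_indicator[symmetric]) (auto intro!: nn_integral_cong sets_Omega_Collect)
      finally show ?thesis .
    qed
    then show ?thesis
      using Ring_mean by (simp add: nn_integral_Omega_component[OF mu])
  qed
  also have "\<dots> \<le> 1 + (\<Sum>j. ennreal (C * \<rho> ^ j))"
    using bound by (intro add_left_mono suminf_le) auto
  also have "(\<Sum>j. ennreal (C * \<rho> ^ j)) = ennreal (\<Sum>j. C * \<rho> ^ j)"
    using C \<rho> by (intro suminf_ennreal2) (auto intro!: summable_mult summable_geometric)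
  also have "1 + \<dots> < \<infinity>"
    by simp
  finally show ?thesis .
qed

lemma measurable_emeasure_env_law[measurable]:
  assumes mu: "0 < mu" and A: "A \<in> sets ENV"
  shows "(\<lambda>t. emeasure (env_law mu p t) A) \<in> borel_measurable borel"
proof -
  interpret prob_space "Omega mu p" by (rule prob_space_Omega[OF mu])
  define S where "S = (\<lambda>z. env (snd z) (fst z)) -` A \<inter> space (borel \<Otimes>\<^sub>M Omega mu p)"
  have "(\<lambda>z. env (snd z) (fst z)) \<in> measurable (borel \<Otimes>\<^sub>M Omega mu p) ENV"
    by measurable
  then have "S \<in> sets (borel \<Otimes>\<^sub>M Omega mu p)"
    unfolding S_def using A by (rule measurable_sets)
  then have "(\<lambda>t. emeasure (Omega mu p) (Pair t -` S)) \<in> borel_measurable borel"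
    by (rule measurable_emeasure_Pair)
  moreover have "Pair t -` S = {\<omega>. env \<omega> t \<in> A}" for t
    unfolding S_def by (auto simp: space_pair_measure)
  ultimately show ?thesis
    by (simp add: emeasure_env_law[OF A])
qed

definition occupation :: "real \<Rightarrow> real \<Rightarrow> (int \<Rightarrow> bool) set \<Rightarrow> (src \<Rightarrow> real) \<Rightarrow> ennreal" where
  "occupation mu p A \<omega> = (\<integral>\<^sup>+t\<in>{0..busy_end \<omega>}. emeasure (env_law mu p t) A \<partial>lborel)"

lemma measurable_occupation:
  assumes mu: "0 < mu" and A: "A \<in> sets ENV"
  shows "occupation mu p A \<in> borel_measurable (Omega mu p)"
proof -
  have [measurable]: "(\<lambda>t. emeasure (env_law mu p t) A) \<in> borel_measurable borel"
    using mu A by (rule measurable_emeasure_env_law)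
  have [measurable]: "Measurable.pred (Omega mu p \<Otimes>\<^sub>M lborel) (\<lambda>z. snd z \<le> busy_end (fst z))"
    using borel_measurable_le[of snd "Omega mu p \<Otimes>\<^sub>M lborel" "\<lambda>z. busy_end (fst z)"] by (simp add: pred_def)
  have "(\<lambda>z. emeasure (env_law mu p (snd z)) A * indicator {z. 0 \<le> snd z \<and> snd z \<le> busy_end (fst z)} z)
      \<in> borel_measurable (Omega mu p \<Otimes>\<^sub>M lborel)"
    by measurable
  then have "(\<lambda>(\<omega>, t). emeasure (env_law mu p t) A * indicator {0..busy_end \<omega>} t)
      \<in> borel_measurable (Omega mu p \<Otimes>\<^sub>M lborel)"
    by (simp add: split_beta' indicator_def)
  then show ?thesis
    unfolding occupation_def[abs_def] by (rule lborel.borel_measurable_nn_integral)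
qed

lemma Q_fun_eq:
  assumes mu: "0 < mu"
  shows "Q_fun mu p A
    = (\<integral>\<^sup>+\<omega>. occupation mu p A \<omega> \<partial>Omega mu p) / (\<integral>\<^sup>+\<omega>. ennreal (busy_end \<omega>) \<partial>Omega mu p)"
proof -
  have "(\<integral>\<^sup>+\<omega>. (\<integral>\<^sup>+t\<in>{0..tau1 \<omega>}. emeasure (env_law mu p t) A \<partial>lborel) \<partial>Omega mu p)
      = (\<integral>\<^sup>+\<omega>. occupation mu p A \<omega> \<partial>Omega mu p)"
    unfolding occupation_def using AE_tau1_eq_busy_end[OF mu, of p]
    by (intro nn_integral_cong_AE) (auto elim: AE_mp)
  moreover have "(\<integral>\<^sup>+\<omega>. ennreal (tau1 \<omega>) \<partial>Omega mu p) = (\<integral>\<^sup>+\<omega>. ennreal (busy_end \<omega>) \<partial>Omega mu p)"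
    using AE_tau1_eq_busy_end[OF mu, of p] by (intro nn_integral_cong_AE) (auto elim: AE_mp)
  ultimately show ?thesis
    unfolding Q_fun_def by simp
qed

lemma countably_additive_Q_fun:
  assumes mu: "0 < mu"
  shows "countably_additive (sets ENV) (Q_fun mu p)"
  unfolding countably_additive_def
proof safe
  fix A :: "nat \<Rightarrow> (int \<Rightarrow> bool) set"
  assume A: "range A \<subseteq> sets ENV" "disjoint_family A"
  have "emeasure (env_law mu p t) (\<Union> (range A)) = (\<Sum>i. emeasure (env_law mu p t) (A i))" for t
    using A by (intro suminf_emeasure[symmetric]) (auto simp: env_law_def)
  then have "occupation mu p (\<Union> (range A)) \<omega> = (\<integral>\<^sup>+t. (\<Sum>i. emeasure (env_law mu p t) (A i) * indicator {0..busy_end \<omega>} t) \<partial>lborel)" for \<omega>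
    by (simp add: occupation_def ennreal_suminf_multc)
  also have "\<dots> \<omega> = (\<Sum>i. occupation mu p (A i) \<omega>)" for \<omega>
    unfolding occupation_def using A mu
    by (intro nn_integral_suminf) (auto simp: measurable_lborel1)
  finally have "(\<integral>\<^sup>+\<omega>. occupation mu p (\<Union> (range A)) \<omega> \<partial>Omega mu p)
      = (\<Sum>i. \<integral>\<^sup>+\<omega>. occupation mu p (A i) \<omega> \<partial>Omega mu p)"
    using A by (simp add: nn_integral_suminf measurable_occupation[OF mu])
  then show "(\<Sum>i. Q_fun mu p (A i)) = Q_fun mu p (\<Union> (range A))"
    unfolding Q_fun_eq[OF mu] divide_ennreal_def by (simp add: ennreal_suminf_multc)
qed

lemma sets_Q: "sets (Q mu p) = sets ENV"
  unfolding Q_def using sets.sigma_sets_eq[of ENV] by (simp add: sets.space_closed)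

lemma emeasure_Q:
  assumes mu: "0 < mu" and A: "A \<in> sets ENV"
  shows "emeasure (Q mu p) A = Q_fun mu p A"
  unfolding Q_def
proof (rule emeasure_measure_of_sigma)
  show "sigma_algebra (space ENV) (sets ENV)"
    by (rule sets.sigma_algebra_axioms)
  show "positive (sets ENV) (Q_fun mu p)"
    unfolding positive_def Q_fun_def by simp
qed (simp_all add: A countably_additive_Q_fun[OF mu])

lemma occupation_eq_0:
  assumes "0 < mu" and "A \<in> sets ENV" and "emeasure (pi_p p) A = 0"
  shows "occupation mu p A \<omega> = 0"
  using emeasure_env_eq_0[OF assms] by (simp add: occupation_def emeasure_env_law[OF assms(2)])

lemma occupation_ge:
  assumes mu: "0 < mu" and A: "A \<in> sets ENV" and \<omega>: "regular \<omega>" "1 < \<omega> (Ring 0)"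
  shows "ennreal (exp (- 1)) * emeasure (pi_p p) A \<le> occupation mu p A \<omega>"
proof -
  have "\<forall>k\<ge>1. 0 \<le> \<omega> (Ring k)"
    using \<omega>(1) by (auto simp: regular_def less_imp_le)
  then have "1 \<le> busy_end \<omega>"
    using ring_time_mono[of \<omega> 0 "busy_last \<omega>"] residual_nonneg[of \<omega> "busy_last \<omega>"] \<omega>(2)
    by (simp add: busy_end_def ring_time_0)
  have "ennreal (exp (- 1)) * emeasure (pi_p p) A
      = (\<integral>\<^sup>+t. ennreal (exp (- 1)) * emeasure (pi_p p) A * indicator {0..1::real} t \<partial>lborel)"
    by (subst nn_integral_cmult_indicator) auto
  also have "\<dots> \<le> occupation mu p A \<omega>"
    unfolding occupation_def
  proof (rule nn_integral_mono)
    fix t :: real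
    show "ennreal (exp (- 1)) * emeasure (pi_p p) A * indicator {0..1} t
        \<le> emeasure (env_law mu p t) A * indicator {0..busy_end \<omega>} t"
    proof (cases "t \<in> {0..1}")
      case True
      then have "ennreal (exp (- 1)) * emeasure (pi_p p) A \<le> ennreal (exp (- t)) * emeasure (pi_p p) A"
        by (intro mult_right_mono ennreal_leI) auto
      also have "\<dots> \<le> emeasure (env_law mu p t) A"
        using True emeasure_env_ge[OF mu A, of t p] by (simp add: emeasure_env_law[OF A])
      finally show ?thesis
        using True \<open>1 \<le> busy_end \<omega>\<close> by (simp add: indicator_def)
    qed simp
  qed
  finally show ?thesis .
qed

lemma nn_integral_occupation_ge:
  assumes mu: "0 < mu" and A: "A \<in> sets ENV"
  shows "ennreal (exp (- 1)) * ennreal (exp (- 1)) * emeasure (pi_p p) A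
    \<le> (\<integral>\<^sup>+\<omega>. occupation mu p A \<omega> \<partial>Omega mu p)"
proof -
  define c where "c = ennreal (exp (- 1)) * emeasure (pi_p p) A"
  have "(\<integral>\<^sup>+\<omega>. indicator {1<..} (\<omega> (Ring 0)) \<partial>Omega mu p) = emeasure (expo 1) {1<..}"
    by (subst nn_integral_Omega_component[OF mu]) simp_all
  also have "\<dots> = ennreal (exp (- 1))"
    using expo_greaterThan[of 1 1] by simp
  finally have "ennreal (exp (- 1)) * ennreal (exp (- 1)) * emeasure (pi_p p) A
      = (\<integral>\<^sup>+\<omega>. c * indicator {1<..} (\<omega> (Ring 0)) \<partial>Omega mu p)"
    by (simp add: nn_integral_cmult c_def mult_ac)
  also have "\<dots> \<le> (\<integral>\<^sup>+\<omega>. occupation mu p A \<omega> \<partial>Omega mu p)"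
    using AE_regular[OF mu, of p]
    by (rule nn_integral_mono_AE[OF AE_mp])
      (auto simp: c_def indicator_def intro!: occupation_ge[OF mu A])
  finally show ?thesis .
qed

lemma emeasure_Q_eq_0_iff:
  assumes mu: "0 < mu" and A: "A \<in> sets ENV"
  shows "emeasure (Q mu p) A = 0 \<longleftrightarrow> emeasure (pi_p p) A = 0"
proof
  assume "emeasure (pi_p p) A = 0"
  then show "emeasure (Q mu p) A = 0"
    by (simp add: emeasure_Q[OF mu A] Q_fun_eq[OF mu] occupation_eq_0[OF mu A])
next
  assume "emeasure (Q mu p) A = 0"
  then have "(\<integral>\<^sup>+\<omega>. occupation mu p A \<omega> \<partial>Omega mu p) = 0"
    using nn_integral_busy_end_finite[OF mu, of p]
    by (auto simp: emeasure_Q[OF mu A] Q_fun_eq[OF mu] ennreal_divide_eq_0_iff)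
  then show "emeasure (pi_p p) A = 0"
    using nn_integral_occupation_ge[OF mu A, of p] by simp
qed

theorem corollary3p5:
  fixes mu p :: real
  assumes "0 < mu" and "0 < p" and "p < 1"
  shows "absolutely_continuous (pi_p p) (Q mu p) \<and> absolutely_continuous (Q mu p) (pi_p p)"
proof -
  have "null_sets (Q mu p) = null_sets (pi_p p)"
    using emeasure_Q_eq_0_iff[OF \<open>0 < mu\<close>] sets_ENV_eq_pi_p[of p]
    by (auto simp: null_sets_def sets_Q)
  then show ?thesis
    by (simp add: absolutely_continuous_def)
qed

end
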